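(* For every $y\in I$ and $\varrho\in(\omega^{\min},\omega^{\max})$ let $\widehat\mu^\varrho(y)=\frac1{\mathbf{Var}^\varrho(\omega)}\sum_{z=y+1}^{\omega^{\max}}(z-\varrho)\mu^\varrho(z)$. Then the family of probability measures $\widehat\mu^\varrho$ on $I$ is stochastically nondecreasing in $\varrho$: for every bounded nondecreasing $\varphi:I\to\mathbb R$, $\varrho\mapsto\sum_{y\in I}\varphi(y)\widehat\mu^\varrho(y)$ is nondecreasing on $(\omega^{\min},\omega^{\max})$.
   Context: Fix extended integers $-\infty\le\omega^{\min}\le0$, $1\le\omega^{\max}\le\infty$ and $I=\{z\in\mathbb Z:\omega^{\min}-1<z<\omega^{\max}+1\}$. Let $f:I\to[0,\infty)$ be nondecreasing with $f(\omega^{\min})=0$ if $\omega^{\min}$ is finite and $f(z)>0$ for $z>\omega^{\min}$. Set $f(0)!=1$, $f(z)!=\prod_{y=1}^zf(y)$ for $z>0$, $f(z)!=1/\prod_{y=z+1}^0f(y)$ for $z<0$. Let $\bar\theta=\lim_{z\to\infty}\log f(z)$ if $\omega^{\max}=\infty$, $\bar\theta=\infty$ otherwise; $\underline\theta=\lim_{z\to\infty}\log f(-z)$ if $\omega^{\min}=-\infty$, $\underline\theta=-\infty$ otherwise; assume $\underline\theta<\bar\theta$. For $\theta\in(\underline\theta,\bar\theta)$, $Z(\theta)=\sum_{z\in I}e^{\theta z}/f(z)!<\infty$ and $\mu^\theta(z)=e^{\theta z}/(Z(\theta)f(z)!)$, $z\in I$. The mean $\varrho(\theta)=\sum_zz\mu^\theta(z)$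 is a strictly increasing bijection $(\underline\theta,\bar\theta)\to(\omega^{\min},\omega^{\max})$; $\mu^\varrho$ denotes $\mu^{\theta(\varrho)}$ and $\mathbf{Var}^\varrho(\omega)$ the variance of a $\mu^\varrho$-distributed $\omega$. *)

theory Defs
  imports "HOL-Analysis.Analysis"
begin

text \<open>Extended integers omega_min, omega_max are modelled as extended reals
  that are either infinite or integer-valued.\<close>

definition Iset :: "ereal \<Rightarrow> ereal \<Rightarrow> int set" where
  "Iset wmin wmax = {z. wmin - 1 < ereal (real_of_int z) \<and> ereal (real_of_int z) < wmax + 1}"

definition ffact :: "(int \<Rightarrow> real) \<Rightarrow> int \<Rightarrow> real" where
  "ffact f z = (if 0 \<le> z then (\<Prod>y\<in>{1..z}. f y) else 1 / (\<Prod>y\<in>{z+1..0}. f y))"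

definition theta_sup :: "ereal \<Rightarrow> (int \<Rightarrow> real) \<Rightarrow> ereal" where
  "theta_sup wmax f = (if wmax = \<infinity> then lim (\<lambda>n::nat. ereal (ln (f (int n)))) else \<infinity>)"

definition theta_inf :: "ereal \<Rightarrow> (int \<Rightarrow> real) \<Rightarrow> ereal" where
  "theta_inf wmin f = (if wmin = -\<infinity> then lim (\<lambda>n::nat. ereal (ln (f (- int n)))) else -\<infinity>)"

definition Zpart :: "ereal \<Rightarrow> ereal \<Rightarrow> (int \<Rightarrow> real) \<Rightarrow> real \<Rightarrow> real" where
  "Zpart wmin wmax f \<theta> = (\<Sum>\<^sub>\<infinity>z\<in>Iset wmin wmax. exp (\<theta> * real_of_int z) / ffact f z)"

definition mu_theta :: "ereal \<Rightarrow> ereal \<Rightarrow> (int \<Rightarrow> real) \<Rightarrow> real \<Rightarrow> int \<Rightarrow> real" where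
  "mu_theta wmin wmax f \<theta> z = exp (\<theta> * real_of_int z) / (Zpart wmin wmax f \<theta> * ffact f z)"

definition mean_theta :: "ereal \<Rightarrow> ereal \<Rightarrow> (int \<Rightarrow> real) \<Rightarrow> real \<Rightarrow> real" where
  "mean_theta wmin wmax f \<theta> = (\<Sum>\<^sub>\<infinity>z\<in>Iset wmin wmax. real_of_int z * mu_theta wmin wmax f \<theta> z)"

text \<open>theta(rho): the inverse of the (strictly increasing, bijective) mean map.\<close>
definition theta_of :: "ereal \<Rightarrow> ereal \<Rightarrow> (int \<Rightarrow> real) \<Rightarrow> real \<Rightarrow> real" where
  "theta_of wmin wmax f \<rho> = (THE \<theta>. theta_inf wmin f < ereal \<theta> \<and> ereal \<theta> < theta_sup wmax f
       \<and> mean_theta wmin wmax f \<theta> = \<rho>)"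

definition mu_rho :: "ereal \<Rightarrow> ereal \<Rightarrow> (int \<Rightarrow> real) \<Rightarrow> real \<Rightarrow> int \<Rightarrow> real" where
  "mu_rho wmin wmax f \<rho> z = mu_theta wmin wmax f (theta_of wmin wmax f \<rho>) z"

definition var_rho :: "ereal \<Rightarrow> ereal \<Rightarrow> (int \<Rightarrow> real) \<Rightarrow> real \<Rightarrow> real" where
  "var_rho wmin wmax f \<rho> = (\<Sum>\<^sub>\<infinity>z\<in>Iset wmin wmax. (real_of_int z - \<rho>)^2 * mu_rho wmin wmax f \<rho> z)"

definition muhat :: "ereal \<Rightarrow> ereal \<Rightarrow> (int \<Rightarrow> real) \<Rightarrow> real \<Rightarrow> int \<Rightarrow> real" where
  "muhat wmin wmax f \<rho> y = (1 / var_rho wmin wmax f \<rho>) *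
     (\<Sum>\<^sub>\<infinity>z\<in>{z\<in>Iset wmin wmax. y < z}. (real_of_int z - \<rho>) * mu_rho wmin wmax f \<rho> z)"

end

theory Submission
  imports Defs
begin

text \<open>Write \<open>\<mu>\<^sup>\<rho>\<close> as the exponential tilt \<open>\<mu>\<^sup>\<theta>\<close> with \<open>\<theta> = \<theta>(\<rho>)\<close> and let \<open>\<Phi>\<close> be the
  discrete antiderivative of \<open>\<phi>\<close>. Because \<open>\<rho>\<close> is the mean of \<open>\<mu>\<^sup>\<theta>\<close>, summation by parts
  turns the expectation of \<open>\<phi>\<close> under \<open>\<mu>\<^sup>\<rho>\<close>-hat into the regression slope
  \<open>Cov(\<omega>, \<Phi>(\<omega>)) / Var(\<omega>)\<close> under \<open>\<mu>\<^sup>\<theta>\<close>. As \<open>\<theta>(\<rho>)\<close> is nondecreasing, it suffices that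
  this slope is nondecreasing in \<open>\<theta>\<close>. Its derivative is \<open>E[q(\<omega>) \<Phi>(\<omega>)] / D\<^sup>2\<close> for the
  quadratic \<open>q(z) = D (z - m)\<^sup>2 - \<kappa> (z - m) - D\<^sup>2\<close>, where \<open>m\<close>, \<open>D\<close>, \<open>\<kappa>\<close> are the mean,
  variance and third central moment. The quadratic \<open>q\<close> is orthogonal to affine functions and
  has real roots \<open>r\<^sub>1 \<le> r\<^sub>2\<close>; since \<open>\<Phi>\<close> is convex, some affine \<open>\<ell>\<close> lies below \<open>\<Phi>\<close> outside
  \<open>[r\<^sub>1, r\<^sub>2]\<close> and above it inside, so \<open>E[q \<Phi>] = E[q (\<Phi> - \<ell>)] \<ge> 0\<close>.

  That \<open>\<theta>(\<rho>)\<close> exists at all follows from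
  \<open>d/d\<theta> (Z(\<theta>) e\<^bsup>-\<rho>\<theta>\<^esup>) = Z(\<theta>) e\<^bsup>-\<rho>\<theta>\<^esup> (mean(\<theta>) - \<rho>)\<close>: if the mean never exceeded \<open>\<rho>\<close>,
  this tilted partition function would stay bounded as \<open>\<theta>\<close> increases, which the growth of the
  weights near the end of the parameter range rules out (and symmetrically below \<open>\<rho>\<close>).\<close>

lemma power_le_exp:
  fixes x :: real
  assumes "0 \<le> x"
  shows "x ^ n \<le> real n ^ n * exp x"
proof (cases "n = 0")
  case False
  hence n: "real n > 0" by simp
  have "x / n \<le> exp (x / n)"
    using exp_ge_add_one_self[of "x / n"] by linarith
  hence "(x / n) ^ n \<le> exp (x / n) ^ n"
    using assms n by (intro power_mono) auto
  also have "\<dots> = exp x"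
    using n by (simp add: exp_of_nat_mult[symmetric])
  finally show ?thesis
    using n by (simp add: power_divide field_simps)
qed (use assms in simp)

lemma summable_on_exp_neg_abs:
  fixes a :: real
  assumes "a > 0"
  shows "(\<lambda>z::int. exp (- a * \<bar>real_of_int z\<bar>)) summable_on UNIV"
proof -
  have "exp (- a * real n) = exp (- a) ^ n" for n
    by (simp add: exp_of_nat_mult[symmetric] mult.commute)
  hence geometric: "(\<lambda>n::nat. exp (- a * real n)) summable_on UNIV"
    using assms by (intro summable_nonneg_imp_summable_on) (auto intro: summable_geometric)
  have "(\<lambda>z::int. exp (- a * \<bar>real_of_int z\<bar>)) summable_on range int"
    "(\<lambda>z::int. exp (- a * \<bar>real_of_int z\<bar>)) summable_on range (\<lambda>n. - int n)"
    by (subst summable_on_reindex; use geometric in \<open>simp add: o_def inj_on_def\<close>)+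
  moreover have "(UNIV :: int set) = range int \<union> range (\<lambda>n. - int n)"
    by (auto intro: range_eqI[of _ _ "nat _"] simp: image_def) presburger
  ultimately show ?thesis
    by (metis summable_on_union)
qed

lemma summable_on_poly_exp_neg_abs:
  fixes a :: real
  assumes "a > 0"
  shows "(\<lambda>z::int. (1 + \<bar>real_of_int z\<bar>) ^ k * exp (- a * \<bar>real_of_int z\<bar>)) summable_on UNIV"
proof (rule summable_on_comparison_test)
  define C where "C = (real k * 2 / a) ^ k * exp (a / 2)"
  show "(\<lambda>z::int. C * exp (- (a / 2) * \<bar>real_of_int z\<bar>)) summable_on UNIV"
    using assms by (intro summable_on_cmult_right summable_on_exp_neg_abs) auto
  fix z :: int
  define x where "x = 1 + \<bar>real_of_int z\<bar>"
  have x: "0 \<le> x" by (simp add: x_def)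
  have "x ^ k = (2 / a) ^ k * (a / 2 * x) ^ k"
    using assms by (simp add: power_mult_distrib[symmetric])
  also have "\<dots> \<le> (2 / a) ^ k * (real k ^ k * exp (a / 2 * x))"
    using assms x by (intro mult_left_mono power_le_exp) auto
  also have "\<dots> = C * exp (a / 2 * \<bar>real_of_int z\<bar>)"
  proof -
    have "exp (a / 2 * x) = exp (a / 2) * exp (a / 2 * \<bar>real_of_int z\<bar>)"
      by (simp add: x_def distrib_left exp_add)
    thus ?thesis by (simp add: C_def power_mult_distrib power_divide)
  qed
  finally have "x ^ k * exp (- a * \<bar>real_of_int z\<bar>)
      \<le> C * exp (a / 2 * \<bar>real_of_int z\<bar>) * exp (- a * \<bar>real_of_int z\<bar>)"
    by (intro mult_right_mono) auto
  also have "\<dots> = C * exp (- (a / 2) * \<bar>real_of_int z\<bar>)"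
    by (simp add: mult.assoc flip: exp_add)
  finally show "(1 + \<bar>real_of_int z\<bar>) ^ k * exp (- a * \<bar>real_of_int z\<bar>)
      \<le> C * exp (- (a / 2) * \<bar>real_of_int z\<bar>)" by (simp add: x_def)
qed simp

lemma exp_mult_le_exp_add:
  fixes t \<theta> \<delta> x :: real
  assumes "\<bar>t - \<theta>\<bar> \<le> \<delta>"
  shows "exp (t * x) \<le> exp ((\<theta> - \<delta>) * x) + exp ((\<theta> + \<delta>) * x)"
proof (cases "x \<ge> 0")
  case True
  hence "t * x \<le> (\<theta> + \<delta>) * x" using assms by (intro mult_right_mono) auto
  thus ?thesis by (smt (verit) exp_gt_zero exp_le_cancel_iff)
next
  case False
  hence "t * x \<le> (\<theta> - \<delta>) * x" using assms by (intro mult_right_mono_neg) auto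
  thus ?thesis by (smt (verit) exp_gt_zero exp_le_cancel_iff)
qed

lemma quadratic_factor:
  fixes D \<kappa> y :: real
  assumes "0 < D"
  defines "r \<equiv> sqrt (\<kappa>\<^sup>2 + 4 * D ^ 3)"
  shows "D * y\<^sup>2 - \<kappa> * y - D\<^sup>2 = D * ((y - (\<kappa> - r) / (2 * D)) * (y - (\<kappa> + r) / (2 * D)))"
    and "(\<kappa> - r) / (2 * D) \<le> (\<kappa> + r) / (2 * D)"
proof -
  have "r * r = \<kappa>\<^sup>2 + 4 * D ^ 3"
    using assms(1) unfolding r_def by (simp add: add_nonneg_nonneg)
  thus "D * y\<^sup>2 - \<kappa> * y - D\<^sup>2 = D * ((y - (\<kappa> - r) / (2 * D)) * (y - (\<kappa> + r) / (2 * D)))"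
    using assms(1) by (simp add: field_simps power2_eq_square power3_eq_cube)
  show "(\<kappa> - r) / (2 * D) \<le> (\<kappa> + r) / (2 * D)"
    using assms(1) unfolding r_def by (intro divide_right_mono) auto
qed

lemma sums_int_decode:
  fixes F :: "int \<Rightarrow> real"
  assumes "F summable_on UNIV"
  shows "(\<lambda>n. F (int_decode n)) sums (\<Sum>\<^sub>\<infinity>z. F z)"
proof -
  have "((\<lambda>n. F (int_decode n)) has_sum (\<Sum>\<^sub>\<infinity>z. F z)) UNIV"
    using assms by (subst has_sum_reindex_bij_betw[OF bij_int_decode]) simp
  thus ?thesis by (rule has_sum_imp_sums)
qed

lemma uniformly_convergent_on_exp_series_deriv:
  fixes c a :: "int \<Rightarrow> real"
  assumes "(\<lambda>z. a z * exp ((\<theta> - \<delta>) * real_of_int z)) summable_on UNIV"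
    and "(\<lambda>z. a z * exp ((\<theta> + \<delta>) * real_of_int z)) summable_on UNIV"
    and "\<And>z. \<bar>real_of_int z * c z\<bar> \<le> a z"
  shows "uniformly_convergent_on {\<theta> - \<delta> .. \<theta> + \<delta>} (\<lambda>n t. \<Sum>i<n.
      real_of_int (int_decode i) * c (int_decode i) * exp (t * real_of_int (int_decode i)))"
proof (rule Weierstrass_m_test')
  let ?M = "\<lambda>n. a (int_decode n) * exp ((\<theta> - \<delta>) * real_of_int (int_decode n))
    + a (int_decode n) * exp ((\<theta> + \<delta>) * real_of_int (int_decode n))"
  show "summable ?M"
    by (intro summable_add sums_summable[OF sums_int_decode] assms(1,2))
  fix n t assume "t \<in> {\<theta> - \<delta> .. \<theta> + \<delta>}"
  define z where "z = int_decode n"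
  have "norm (real_of_int z * c z * exp (t * real_of_int z)) = \<bar>real_of_int z * c z\<bar> * exp (t * real_of_int z)"
    by (simp add: abs_mult)
  also have "\<dots> \<le> a z * (exp ((\<theta> - \<delta>) * real_of_int z) + exp ((\<theta> + \<delta>) * real_of_int z))"
    using \<open>t \<in> _\<close> order_trans[OF abs_ge_zero assms(3)]
    by (intro mult_mono assms(3) exp_mult_le_exp_add) auto
  finally show "norm (real_of_int (int_decode n) * c (int_decode n) * exp (t * real_of_int (int_decode n))) \<le> ?M n"
    by (simp add: z_def distrib_left)
qed

lemma has_real_derivative_exp_series_UNIV:
  fixes c :: "int \<Rightarrow> real"
  assumes "\<delta> > 0"
    and summable: "\<And>t. \<bar>t - \<theta>\<bar> \<le> \<delta> \<Longrightarrow>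
      (\<lambda>z. (1 + \<bar>real_of_int z\<bar>) * \<bar>c z\<bar> * exp (t * real_of_int z)) summable_on UNIV"
  shows "((\<lambda>t. \<Sum>\<^sub>\<infinity>z. c z * exp (t * real_of_int z)) has_real_derivative
           (\<Sum>\<^sub>\<infinity>z. real_of_int z * c z * exp (\<theta> * real_of_int z))) (at \<theta>)"
proof -
  define F where "F n t = c (int_decode n) * exp (t * real_of_int (int_decode n))" for n t
  define a where "a z = (1 + \<bar>real_of_int z\<bar>) * \<bar>c z\<bar>" for z
  have a_ge: "\<bar>c z\<bar> \<le> a z" "\<bar>real_of_int z * c z\<bar> \<le> a z" for z
    by (auto simp: a_def abs_mult algebra_simps)
  have summable_a: "(\<lambda>z. a z * exp (t * real_of_int z)) summable_on UNIV" if "\<bar>t - \<theta>\<bar> \<le> \<delta>" for t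
    using summable[OF that] by (simp add: a_def)
  have summable_c: "(\<lambda>z. c z * exp (t * real_of_int z)) summable_on UNIV"
    and summable_zc: "(\<lambda>z. real_of_int z * c z * exp (t * real_of_int z)) summable_on UNIV"
    if "\<bar>t - \<theta>\<bar> \<le> \<delta>" for t
    by (rule abs_summable_summable, rule summable_on_comparison_test[OF summable_a[OF that]];
        use a_ge in \<open>auto simp: abs_mult intro: mult_right_mono\<close>)+
  have "((\<lambda>x. \<Sum>n. F n x) has_field_derivative
      (\<Sum>n. real_of_int (int_decode n) * c (int_decode n) * exp (\<theta> * real_of_int (int_decode n)))) (at \<theta>)"
  proof (rule has_field_derivative_series'(2)[where S = "{\<theta> - \<delta> .. \<theta> + \<delta>}"])
    show "\<theta> \<in> {\<theta> - \<delta> .. \<theta> + \<delta>}" "\<theta> \<in> interior {\<theta> - \<delta> .. \<theta> + \<delta>}"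
      using assms(1) by auto
    show "summable (\<lambda>n. F n \<theta>)"
      unfolding F_def using sums_int_decode[OF summable_c[of \<theta>]] assms(1) by (auto simp: sums_iff)
    show "uniformly_convergent_on {\<theta> - \<delta> .. \<theta> + \<delta>} (\<lambda>n t. \<Sum>i<n.
        real_of_int (int_decode i) * c (int_decode i) * exp (t * real_of_int (int_decode i)))"
      using assms(1) by (intro uniformly_convergent_on_exp_series_deriv[of a] summable_a a_ge) auto
  qed (auto simp: F_def intro!: derivative_eq_intros)
  moreover have "(\<Sum>n. real_of_int (int_decode n) * c (int_decode n) * exp (\<theta> * real_of_int (int_decode n)))
      = (\<Sum>\<^sub>\<infinity>z. real_of_int z * c z * exp (\<theta> * real_of_int z))"
    using sums_int_decode[OF summable_zc[of \<theta>]] assms(1) by (simp add: sums_iff)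
  moreover have "eventually (\<lambda>x. (\<Sum>n. F n x) = (\<Sum>\<^sub>\<infinity>z. c z * exp (x * real_of_int z))) (nhds \<theta>)"
  proof (rule eventually_mono)
    show "eventually (\<lambda>x. x \<in> ball \<theta> \<delta>) (nhds \<theta>)"
      using assms(1) by (intro eventually_nhds_in_open) auto
    fix x assume "x \<in> ball \<theta> \<delta>"
    hence "\<bar>x - \<theta>\<bar> \<le> \<delta>" by (auto simp: dist_real_def)
    from sums_int_decode[OF summable_c[OF this]]
    show "(\<Sum>n. F n x) = (\<Sum>\<^sub>\<infinity>z. c z * exp (x * real_of_int z))"
      by (simp add: F_def sums_iff)
  qed
  ultimately show ?thesis
    by (simp add: DERIV_cong_ev)
qed

lemma has_real_derivative_exp_series:
  fixes c :: "int \<Rightarrow> real"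
  assumes "\<delta> > 0"
    and summable: "\<And>t. \<bar>t - \<theta>\<bar> \<le> \<delta> \<Longrightarrow>
      (\<lambda>z. (1 + \<bar>real_of_int z\<bar>) * \<bar>c z\<bar> * exp (t * real_of_int z)) summable_on S"
  shows "((\<lambda>t. \<Sum>\<^sub>\<infinity>z\<in>S. c z * exp (t * real_of_int z)) has_real_derivative
           (\<Sum>\<^sub>\<infinity>z\<in>S. real_of_int z * c z * exp (\<theta> * real_of_int z))) (at \<theta>)"
proof -
  define c' where "c' z = (if z \<in> S then c z else 0)" for z
  have "(\<lambda>z. (1 + \<bar>real_of_int z\<bar>) * \<bar>c' z\<bar> * exp (t * real_of_int z)) summable_on UNIV"
    if "\<bar>t - \<theta>\<bar> \<le> \<delta>" for t
    using summable[OF that] by (subst summable_on_cong_neutral[where T = S]) (auto simp: c'_def)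
  hence "((\<lambda>t. \<Sum>\<^sub>\<infinity>z. c' z * exp (t * real_of_int z)) has_real_derivative
           (\<Sum>\<^sub>\<infinity>z. real_of_int z * c' z * exp (\<theta> * real_of_int z))) (at \<theta>)"
    by (rule has_real_derivative_exp_series_UNIV[OF assms(1)])
  moreover have "(\<Sum>\<^sub>\<infinity>z. c' z * exp (t * real_of_int z)) = (\<Sum>\<^sub>\<infinity>z\<in>S. c z * exp (t * real_of_int z))"
    "(\<Sum>\<^sub>\<infinity>z. real_of_int z * c' z * exp (t * real_of_int z))
       = (\<Sum>\<^sub>\<infinity>z\<in>S. real_of_int z * c z * exp (t * real_of_int z))" for t
    by (rule infsum_cong_neutral; auto simp: c'_def)+
  ultimately show ?thesis by simp
qed

definition poly_bounded :: "(int \<Rightarrow> real) \<Rightarrow> bool" where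
  "poly_bounded g \<longleftrightarrow> (\<exists>C k. \<forall>z. \<bar>g z\<bar> \<le> C * (1 + \<bar>real_of_int z\<bar>) ^ k)"

lemma poly_bounded_linear:
  assumes "\<And>z. \<bar>g z\<bar> \<le> C * \<bar>real_of_int z\<bar>"
  shows "poly_bounded g"
proof -
  have "\<bar>g z\<bar> \<le> \<bar>C\<bar> * (1 + \<bar>real_of_int z\<bar>) ^ 1" for z
  proof -
    have "C * \<bar>real_of_int z\<bar> \<le> \<bar>C\<bar> * (1 + \<bar>real_of_int z\<bar>)"
      by (intro mult_mono) auto
    thus ?thesis using assms[of z] by simp
  qed
  thus ?thesis unfolding poly_bounded_def by blast
qed

lemma poly_bounded_const [simp]: "poly_bounded (\<lambda>z. c)"
  unfolding poly_bounded_def by (rule exI[of _ "\<bar>c\<bar>"], rule exI[of _ 0]) simp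

lemma poly_bounded_id [simp]: "poly_bounded (\<lambda>z. real_of_int z)"
  by (rule poly_bounded_linear[of _ 1]) simp

lemma poly_bounded_mult [simp]:
  assumes "poly_bounded g" "poly_bounded h"
  shows "poly_bounded (\<lambda>z. g z * h z)"
proof -
  obtain C1 k1 C2 k2 where 1: "\<And>z. \<bar>g z\<bar> \<le> C1 * (1 + \<bar>real_of_int z\<bar>) ^ k1"
    and 2: "\<And>z. \<bar>h z\<bar> \<le> C2 * (1 + \<bar>real_of_int z\<bar>) ^ k2"
    using assms unfolding poly_bounded_def by blast
  have "\<bar>g z * h z\<bar> \<le> (C1 * C2) * (1 + \<bar>real_of_int z\<bar>) ^ (k1 + k2)" for z
    using mult_mono[OF 1[of z] 2[of z]] order_trans[OF abs_ge_zero 1[of z]]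
    by (simp add: abs_mult power_add mult_ac)
  thus ?thesis unfolding poly_bounded_def by blast
qed

lemma poly_bounded_add [simp]:
  assumes "poly_bounded g" "poly_bounded h"
  shows "poly_bounded (\<lambda>z. g z + h z)"
proof -
  obtain C1 k1 C2 k2 where 1: "\<And>z. \<bar>g z\<bar> \<le> C1 * (1 + \<bar>real_of_int z\<bar>) ^ k1"
    and 2: "\<And>z. \<bar>h z\<bar> \<le> C2 * (1 + \<bar>real_of_int z\<bar>) ^ k2"
    using assms unfolding poly_bounded_def by blast
  have "\<bar>g z + h z\<bar> \<le> (C1 + C2) * (1 + \<bar>real_of_int z\<bar>) ^ (k1 + k2)" for z
  proof -
    let ?x = "1 + \<bar>real_of_int z\<bar>"
    have "0 \<le> C1 * ?x ^ k1" "0 \<le> C2 * ?x ^ k2"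
      using order_trans[OF abs_ge_zero 1[of z]] order_trans[OF abs_ge_zero 2[of z]] .
    moreover have "0 < ?x ^ k1" "0 < ?x ^ k2" by simp_all
    ultimately have "0 \<le> C1" "0 \<le> C2"
      by (simp_all add: zero_le_mult_iff)
    moreover have "?x ^ k1 \<le> ?x ^ (k1 + k2)" "?x ^ k2 \<le> ?x ^ (k1 + k2)"
      by (intro power_increasing; simp)+
    ultimately have "C1 * ?x ^ k1 + C2 * ?x ^ k2 \<le> (C1 + C2) * ?x ^ (k1 + k2)"
      by (simp add: distrib_right add_mono mult_left_mono)
    thus ?thesis using 1[of z] 2[of z] by linarith
  qed
  thus ?thesis unfolding poly_bounded_def by blast
qed

lemma poly_bounded_minus [simp]: "poly_bounded g \<Longrightarrow> poly_bounded (\<lambda>z. - g z)"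
  unfolding poly_bounded_def by simp

lemma poly_bounded_diff [simp]: "poly_bounded g \<Longrightarrow> poly_bounded h \<Longrightarrow> poly_bounded (\<lambda>z. g z - h z)"
  using poly_bounded_add[of g "\<lambda>z. - h z"] by simp

lemma poly_bounded_abs [simp]: "poly_bounded g \<Longrightarrow> poly_bounded (\<lambda>z. \<bar>g z\<bar>)"
  unfolding poly_bounded_def by simp

section \<open>Discrete antiderivatives\<close>

definition antidiff :: "(int \<Rightarrow> real) \<Rightarrow> int \<Rightarrow> real" where
  "antidiff \<phi> z = (\<Sum>y\<in>{0..<z}. \<phi> y) - (\<Sum>y\<in>{z..<0}. \<phi> y)"

lemma antidiff_diff:
  assumes "a \<le> z"
  shows "antidiff \<phi> z - antidiff \<phi> a = (\<Sum>y\<in>{a..<z}. \<phi> y)"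
proof -
  have split: "sum \<phi> {m..<n} + sum \<phi> {n..<q} = sum \<phi> {m..<q}" if "m \<le> n" "n \<le> q" for m n q :: int
  proof -
    have "{m..<q} = {m..<n} \<union> {n..<q}" using that by auto
    thus ?thesis by (simp add: sum.union_disjoint ivl_disj_int(4))
  qed
  consider "0 \<le> a" | "a < 0" "0 \<le> z" | "z < 0" by linarith
  then show ?thesis
  proof cases
    case 1 with split[of 0 a z] assms show ?thesis by (simp add: antidiff_def)
  next
    case 2 with split[of a 0 z] show ?thesis by (simp add: antidiff_def)
  next
    case 3 with split[of a z 0] assms show ?thesis by (simp add: antidiff_def)
  qed
qed

lemma poly_bounded_antidiff:
  assumes "\<And>y. \<bar>\<phi> y\<bar> \<le> B"
  shows "poly_bounded (antidiff \<phi>)"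
proof (rule poly_bounded_linear)
  fix z
  have "\<bar>antidiff \<phi> z\<bar> \<le> (\<Sum>y\<in>{0..<z}. \<bar>\<phi> y\<bar>) + (\<Sum>y\<in>{z..<0}. \<bar>\<phi> y\<bar>)"
    unfolding antidiff_def by (rule order_trans[OF abs_triangle_ineq4 add_mono[OF sum_abs sum_abs]])
  also have "\<dots> \<le> of_nat (card {0..<z}) * B + of_nat (card {z..<0}) * B"
    by (intro add_mono sum_bounded_above assms)
  also have "\<dots> = B * \<bar>real_of_int z\<bar>"
    by (cases "0 \<le> z") (auto simp: algebra_simps)
  finally show "\<bar>antidiff \<phi> z\<bar> \<le> B * \<bar>real_of_int z\<bar>" .
qed

lemma sum_atLeastLessThan_mono_bounds:
  fixes \<phi> :: "int \<Rightarrow> real"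
  assumes "mono \<phi>" "a \<le> z"
  shows "real_of_int (z - a) * \<phi> a \<le> (\<Sum>y\<in>{a..<z}. \<phi> y)"
    and "(\<Sum>y\<in>{a..<z}. \<phi> y) \<le> real_of_int (z - a) * \<phi> (z - 1)"
proof -
  have "of_nat (card {a..<z}) * \<phi> a \<le> (\<Sum>y\<in>{a..<z}. \<phi> y)"
    "(\<Sum>y\<in>{a..<z}. \<phi> y) \<le> of_nat (card {a..<z}) * \<phi> (z - 1)"
    by (rule sum_bounded_below sum_bounded_above; use assms in \<open>auto simp: mono_def\<close>)+
  thus "real_of_int (z - a) * \<phi> a \<le> (\<Sum>y\<in>{a..<z}. \<phi> y)"
    "(\<Sum>y\<in>{a..<z}. \<phi> y) \<le> real_of_int (z - a) * \<phi> (z - 1)"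
    using assms(2) by simp_all
qed

lemma sum_adjacent_intervals_mono:
  fixes \<phi> :: "int \<Rightarrow> real"
  assumes "mono \<phi>" "a \<le> b" "b \<le> d"
  shows "real_of_int (d - b) * (\<Sum>y\<in>{a..<b}. \<phi> y) \<le> real_of_int (b - a) * (\<Sum>y\<in>{b..<d}. \<phi> y)"
proof -
  have "real_of_int (d - b) * (\<Sum>y\<in>{a..<b}. \<phi> y) \<le> real_of_int (d - b) * (real_of_int (b - a) * \<phi> (b - 1))"
    using assms by (intro mult_left_mono sum_atLeastLessThan_mono_bounds(2)) auto
  also have "\<dots> \<le> real_of_int (b - a) * (real_of_int (d - b) * \<phi> b)"
    using assms monoD[OF assms(1), of "b - 1" b] by (simp add: mult_left_mono mult.left_commute)
  also have "\<dots> \<le> real_of_int (b - a) * (\<Sum>y\<in>{b..<d}. \<phi> y)"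
    using assms by (intro mult_left_mono sum_atLeastLessThan_mono_bounds(1)) auto
  finally show ?thesis .
qed

lemma antidiff_le_chord:
  fixes \<phi> :: "int \<Rightarrow> real"
  assumes mono: "mono \<phi>" and "a < b" "a \<le> z" "z \<le> b"
  defines "s \<equiv> (antidiff \<phi> b - antidiff \<phi> a) / real_of_int (b - a)"
  shows "antidiff \<phi> z \<le> antidiff \<phi> a + s * real_of_int (z - a)"
proof -
  define L where "L = (\<Sum>y\<in>{a..<z}. \<phi> y)"
  define R where "R = (\<Sum>y\<in>{z..<b}. \<phi> y)"
  have ba: "real_of_int (b - a) > 0" using \<open>a < b\<close> by simp
  have "L + R = s * real_of_int (b - a)"
    using antidiff_diff[of a b \<phi>] antidiff_diff[of a z \<phi>] antidiff_diff[of z b \<phi>] assms(2-4) ba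
    by (simp add: L_def R_def s_def)
  have "real_of_int (b - a) * L = real_of_int (b - z) * L + real_of_int (z - a) * L"
    by (simp add: algebra_simps)
  also have "\<dots> \<le> real_of_int (z - a) * R + real_of_int (z - a) * L"
    using sum_adjacent_intervals_mono[OF mono assms(3,4)] by (simp add: L_def R_def)
  also have "\<dots> = real_of_int (z - a) * (L + R)"
    by (simp add: algebra_simps)
  also have "\<dots> = real_of_int (b - a) * (s * real_of_int (z - a))"
    unfolding \<open>L + R = _\<close> by (simp add: mult_ac)
  finally have "real_of_int (b - a) * L \<le> real_of_int (b - a) * (s * real_of_int (z - a))" .
  thus ?thesis using antidiff_diff[OF \<open>a \<le> z\<close>, of \<phi>] ba by (simp add: L_def)
qed

lemma chord_le_antidiff:
  fixes \<phi> :: "int \<Rightarrow> real"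
  assumes mono: "mono \<phi>" and "a < b" "z \<le> a \<or> b \<le> z"
  defines "s \<equiv> (antidiff \<phi> b - antidiff \<phi> a) / real_of_int (b - a)"
  shows "antidiff \<phi> a + s * real_of_int (z - a) \<le> antidiff \<phi> z"
proof -
  have ba: "real_of_int (b - a) > 0" using \<open>a < b\<close> by simp
  have chord: "(\<Sum>y\<in>{a..<b}. \<phi> y) = s * real_of_int (b - a)"
    using antidiff_diff[of a b \<phi>] \<open>a < b\<close> ba by (simp add: s_def)
  from assms(3) show ?thesis
  proof
    assume "z \<le> a"
    with sum_adjacent_intervals_mono[OF mono this, of b] \<open>a < b\<close> chord
    have "real_of_int (b - a) * (\<Sum>y\<in>{z..<a}. \<phi> y) \<le> real_of_int (b - a) * (s * real_of_int (a - z))"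
      by (simp add: algebra_simps)
    hence "(\<Sum>y\<in>{z..<a}. \<phi> y) \<le> s * real_of_int (a - z)"
      using ba by simp
    thus ?thesis using antidiff_diff[OF \<open>z \<le> a\<close>, of \<phi>] by (simp add: algebra_simps)
  next
    assume "b \<le> z"
    with sum_adjacent_intervals_mono[OF mono _ this, of a] \<open>a < b\<close> chord
    have "real_of_int (b - a) * (s * real_of_int (z - b)) \<le> real_of_int (b - a) * (\<Sum>y\<in>{b..<z}. \<phi> y)"
      by (simp add: mult_ac)
    hence "s * real_of_int (z - b) \<le> (\<Sum>y\<in>{b..<z}. \<phi> y)"
      using ba by simp
    thus ?thesis using antidiff_diff[OF \<open>b \<le> z\<close>, of \<phi>] antidiff_diff[of a b \<phi>] \<open>a < b\<close> chord
      by (simp add: algebra_simps)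
  qed
qed

text \<open>The form of convexity used below: for any \<open>r1 \<le> r2\<close> some affine function lies
  below \<open>\<Phi>\<close> outside \<open>[r1, r2]\<close> and above it inside.\<close>

definition secant_sign :: "(int \<Rightarrow> real) \<Rightarrow> bool" where
  "secant_sign \<Phi> \<longleftrightarrow> (\<forall>r1 r2. r1 \<le> r2 \<longrightarrow> (\<exists>c0 c1. \<forall>z.
     0 \<le> (real_of_int z - r1) * (real_of_int z - r2) * (\<Phi> z - (c0 + c1 * real_of_int z))))"

lemma secant_sign_antidiff:
  fixes \<phi> :: "int \<Rightarrow> real"
  assumes mono: "mono \<phi>"
  shows "secant_sign (antidiff \<phi>)"
  unfolding secant_sign_def
proof (intro allI impI)
  fix r1 r2 :: real assume "r1 \<le> r2"
  define a where "a = \<lfloor>r1\<rfloor>"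
  define b where "b = max \<lceil>r2\<rceil> (a + 1)"
  define s where "s = (antidiff \<phi> b - antidiff \<phi> a) / real_of_int (b - a)"
  have "a < b" by (simp add: b_def)
  have "0 \<le> (real_of_int z - r1) * (real_of_int z - r2) *
      (antidiff \<phi> z - ((antidiff \<phi> a - s * real_of_int a) + s * real_of_int z))" for z
  proof (cases "a < z \<and> z < b")
    case True
    hence "z < \<lceil>r2\<rceil>" by (auto simp: b_def max_def split: if_splits)
    hence "r1 < real_of_int z" "real_of_int z < r2"
      using True by (auto simp: a_def less_ceiling_iff) linarith
    with antidiff_le_chord[OF mono \<open>a < b\<close>, of z, folded s_def] True show ?thesis
      by (intro mult_nonpos_nonpos mult_nonneg_nonpos) (auto simp: algebra_simps)
  next
    case False
    hence "z \<le> a \<or> b \<le> z" by auto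
    moreover have "z \<le> a \<Longrightarrow> real_of_int z \<le> r1" "b \<le> z \<Longrightarrow> r2 \<le> real_of_int z"
      by (auto simp: a_def b_def ceiling_le_iff) linarith
    ultimately have "0 \<le> (real_of_int z - r1) * (real_of_int z - r2)"
      using \<open>r1 \<le> r2\<close> by (auto intro: mult_nonpos_nonpos)
    moreover have "0 \<le> antidiff \<phi> z - ((antidiff \<phi> a - s * real_of_int a) + s * real_of_int z)"
      using chord_le_antidiff[OF mono \<open>a < b\<close> \<open>z \<le> a \<or> b \<le> z\<close>, folded s_def]
      by (simp add: algebra_simps)
    ultimately show ?thesis by (rule mult_nonneg_nonneg)
  qed
  thus "\<exists>c0 c1. \<forall>z. 0 \<le> (real_of_int z - r1) * (real_of_int z - r2) *
      (antidiff \<phi> z - (c0 + c1 * real_of_int z))" by blast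
qed

definition step_kernel :: "int \<Rightarrow> int \<Rightarrow> real" where
  "step_kernel y z = (if 0 \<le> y \<and> y < z then 1 else if z \<le> y \<and> y < 0 then - 1 else 0)"

lemma step_kernel_eq_0: "y \<notin> {min 0 z..<max 0 z} \<Longrightarrow> step_kernel y z = 0"
  by (auto simp: step_kernel_def)

lemma abs_step_kernel_le: "\<bar>step_kernel y z\<bar> \<le> 1"
  by (simp add: step_kernel_def)

lemma antidiff_eq_sum_step_kernel:
  "antidiff \<phi> z = (\<Sum>y\<in>{min 0 z..<max 0 z}. \<phi> y * step_kernel y z)"
proof (cases "0 \<le> z")
  case True thus ?thesis by (simp add: antidiff_def step_kernel_def)
next
  case False thus ?thesis by (simp add: antidiff_def step_kernel_def sum_negf)
qed

lemma infsum_tail_eq_step_kernel: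
  fixes q :: "int \<Rightarrow> real"
  assumes "q summable_on S" "(\<Sum>\<^sub>\<infinity>z\<in>S. q z) = 0"
  shows "(\<Sum>\<^sub>\<infinity>z\<in>{z\<in>S. y < z}. q z) = (\<Sum>\<^sub>\<infinity>z\<in>S. step_kernel y z * q z)"
proof (cases "0 \<le> y")
  case True
  hence "(\<Sum>\<^sub>\<infinity>z\<in>S. step_kernel y z * q z) = (\<Sum>\<^sub>\<infinity>z\<in>{z\<in>S. y < z}. q z)"
    by (intro infsum_cong_neutral) (auto simp: step_kernel_def)
  thus ?thesis by simp
next
  case False
  have "S = {z\<in>S. z \<le> y} \<union> {z\<in>S. y < z}" by auto
  hence "(\<Sum>\<^sub>\<infinity>z\<in>S. q z) = (\<Sum>\<^sub>\<infinity>z\<in>{z\<in>S. z \<le> y}. q z) + (\<Sum>\<^sub>\<infinity>z\<in>{z\<in>S. y < z}. q z)"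
    using assms(1) by (metis (no_types, lifting) infsum_Un_disjoint summable_on_subset_banach
        Un_upper1 Un_upper2 disjoint_iff mem_Collect_eq not_le)
  moreover have "(\<Sum>\<^sub>\<infinity>z\<in>S. step_kernel y z * q z) = (\<Sum>\<^sub>\<infinity>z\<in>{z\<in>S. z \<le> y}. - q z)"
    using False by (intro infsum_cong_neutral) (auto simp: step_kernel_def)
  ultimately show ?thesis using assms(2) by (simp add: infsum_uminus)
qed

section \<open>The exponential family\<close>

locale zero_range =
  fixes wmin wmax :: ereal and f :: "int \<Rightarrow> real"
  assumes wmin: "wmin = -\<infinity> \<or> (\<exists>k::int. k \<le> 0 \<and> wmin = ereal (real_of_int k))"
    and wmax: "wmax = \<infinity> \<or> (\<exists>k::int. 1 \<le> k \<and> wmax = ereal (real_of_int k))"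
    and f_mono: "mono_on (Iset wmin wmax) f"
    and f_pos: "\<forall>z\<in>Iset wmin wmax. wmin < ereal (real_of_int z) \<longrightarrow> 0 < f z"
    and theta_lt: "theta_inf wmin f < theta_sup wmax f"
begin

abbreviation "I \<equiv> Iset wmin wmax"
abbreviation "ts \<equiv> theta_sup wmax f"
abbreviation "ti \<equiv> theta_inf wmin f"

definition weight :: "real \<Rightarrow> int \<Rightarrow> real" where
  "weight \<theta> z = exp (\<theta> * real_of_int z) / ffact f z"

definition admissible :: "real \<Rightarrow> bool" where
  "admissible \<theta> \<longleftrightarrow> ti < ereal \<theta> \<and> ereal \<theta> < ts"

lemma mem_I_iff: "z \<in> I \<longleftrightarrow>
     (\<forall>k::int. wmin = ereal (real_of_int k) \<longrightarrow> k \<le> z) \<and> (\<forall>k::int. wmax = ereal (real_of_int k) \<longrightarrow> z \<le> k)"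
proof -
  have "wmin - 1 < ereal (real_of_int z) \<longleftrightarrow> (\<forall>k::int. wmin = ereal (real_of_int k) \<longrightarrow> k \<le> z)"
    "ereal (real_of_int z) < wmax + 1 \<longleftrightarrow> (\<forall>k::int. wmax = ereal (real_of_int k) \<longrightarrow> z \<le> k)"
    using wmin wmax by (auto simp: one_ereal_def)
  thus ?thesis unfolding Iset_def by auto
qed

lemma zero_mem_I [simp]: "0 \<in> I" and one_mem_I [simp]: "1 \<in> I"
  using wmin wmax by (auto simp: mem_I_iff)

lemma mem_I_between: "x \<in> I \<Longrightarrow> y \<in> I \<Longrightarrow> x \<le> z \<Longrightarrow> z \<le> y \<Longrightarrow> z \<in> I"
  unfolding mem_I_iff by (metis order.trans)

lemma mem_I_nonneg: "wmax = \<infinity> \<Longrightarrow> 0 \<le> z \<Longrightarrow> z \<in> I"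
  using wmin unfolding mem_I_iff by auto

lemma mem_I_nonpos: "wmin = -\<infinity> \<Longrightarrow> z \<le> 0 \<Longrightarrow> z \<in> I"
  using wmax unfolding mem_I_iff by auto

lemma wmax_mem_I: "wmax = ereal (real_of_int K) \<Longrightarrow> K \<in> I"
  using wmin wmax unfolding mem_I_iff by auto

lemma wmin_mem_I: "wmin = ereal (real_of_int k) \<Longrightarrow> k \<in> I"
  using wmin wmax unfolding mem_I_iff by auto

lemma clamp_to_I:
  obtains clamp :: "int \<Rightarrow> int" where "mono clamp" "\<And>y. clamp y \<in> I" "\<And>y. y \<in> I \<Longrightarrow> clamp y = y"
proof -
  obtain lo :: "int \<Rightarrow> int" where lo: "mono lo" "\<And>y. y \<in> I \<Longrightarrow> lo y = y"
    "\<And>y k. wmin = ereal (real_of_int k) \<Longrightarrow> k \<le> lo y"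
  proof (cases "wmin = -\<infinity>")
    case True thus thesis by (intro that[of id]) (auto simp: mono_def)
  next
    case False
    then obtain k where k: "wmin = ereal (real_of_int k)" using wmin by auto
    have "k \<le> y" if "y \<in> I" for y using that k unfolding mem_I_iff by auto
    with k show thesis by (intro that[of "max k"]) (auto simp: mono_def)
  qed
  obtain hi :: "int \<Rightarrow> int" where hi: "mono hi" "\<And>y. min 1 y \<le> hi y" "\<And>y. y \<in> I \<Longrightarrow> hi y = y"
    "\<And>y K. wmax = ereal (real_of_int K) \<Longrightarrow> hi y \<le> K"
  proof (cases "wmax = \<infinity>")
    case True thus thesis by (intro that[of id]) (auto simp: mono_def)
  next
    case False
    then obtain K where K: "1 \<le> K" "wmax = ereal (real_of_int K)" using wmax by auto
    have "y \<le> K" if "y \<in> I" for y using that K(2) unfolding mem_I_iff by auto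
    with K show thesis by (intro that[of "min K"]) (auto simp: mono_def)
  qed
  have "hi (lo y) \<in> I" for y
    unfolding mem_I_iff
  proof (intro conjI allI impI)
    fix k assume k: "wmin = ereal (real_of_int k)"
    hence "k \<le> hi k" using hi(2)[of k] wmin by auto
    also have "\<dots> \<le> hi (lo y)" using lo(3)[OF k] by (rule monoD[OF hi(1)])
    finally show "k \<le> hi (lo y)" .
  next
    fix K assume "wmax = ereal (real_of_int K)"
    thus "hi (lo y) \<le> K" by (rule hi(4))
  qed
  thus thesis
    using lo(1,2) hi(1,3) by (intro that[of "hi \<circ> lo"]) (auto simp: mono_def)
qed

lemma monotone_bounded_extension:
  assumes mono: "mono_on I \<phi>" and bound: "\<forall>y\<in>I. \<bar>\<phi> y\<bar> \<le> B"
  obtains \<psi> where "mono \<psi>" "\<And>y. y \<in> I \<Longrightarrow> \<psi> y = \<phi> y" "\<And>y. \<bar>\<psi> y\<bar> \<le> B"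
proof -
  obtain clamp where clamp: "mono clamp" "\<And>y. clamp y \<in> I" "\<And>y. y \<in> I \<Longrightarrow> clamp y = y"
    using clamp_to_I by blast
  show thesis
  proof (rule that[of "\<phi> \<circ> clamp"])
    show "mono (\<phi> \<circ> clamp)"
      using clamp(1,2) by (auto simp: mono_def intro: mono_onD[OF mono])
  qed (use clamp bound in auto)
qed

lemma f_pos_above:
  assumes "y \<in> I" "x \<in> I" "x < y"
  shows "0 < f y"
proof -
  have "wmin < ereal (real_of_int y)"
    using wmin assms(2,3) unfolding mem_I_iff by auto
  thus ?thesis using f_pos assms(1) by blast
qed

lemma f_pos_nonpos: "wmin = -\<infinity> \<Longrightarrow> y \<in> I \<Longrightarrow> 0 < f y"
  using f_pos by simp

lemma ffact_pos:
  assumes "z \<in> I"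
  shows "0 < ffact f z"
proof -
  have "0 < f y" if "0 < y" "y \<le> z" for y
    using f_pos_above[OF mem_I_between[OF zero_mem_I assms] zero_mem_I] that by simp
  moreover have "0 < f y" if "z < y" "y \<le> 0" for y
    using f_pos_above[OF mem_I_between[OF assms zero_mem_I] assms] that by simp
  ultimately show ?thesis
    unfolding ffact_def by (auto intro!: prod_pos)
qed

lemma weight_pos: "z \<in> I \<Longrightarrow> 0 < weight \<theta> z"
  unfolding weight_def using ffact_pos by simp

lemma weight_nonneg: "z \<in> I \<Longrightarrow> 0 \<le> weight \<theta> z"
  using weight_pos less_imp_le by blast

lemma weight_shift: "weight \<theta> z = weight \<theta>' z * exp ((\<theta> - \<theta>') * real_of_int z)"
  unfolding weight_def by (simp add: mult_exp_exp algebra_simps)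

lemma weight_succ:
  assumes "z \<in> I" "z + 1 \<in> I"
  shows "weight \<theta> (z + 1) = weight \<theta> z * exp \<theta> / f (z + 1)"
proof -
  have "ffact f (z + 1) = ffact f z * f (z + 1)"
  proof (cases "0 \<le> z")
    case True
    hence "{1..z + 1} = insert (z + 1) {1..z}" by auto
    thus ?thesis using True by (simp add: ffact_def)
  next
    case False
    hence "{z + 1..0} = insert (z + 1) {z + 2..0}" by auto
    moreover have "0 < f (z + 1)" using f_pos_above[OF assms(2,1)] by simp
    ultimately show ?thesis using False
      by (cases "z = -1") (auto simp: ffact_def add.assoc)
  qed
  thus ?thesis unfolding weight_def by (simp add: distrib_left exp_add)
qed

lemma admissible_between: "admissible a \<Longrightarrow> admissible b \<Longrightarrow> a \<le> t \<Longrightarrow> t \<le> b \<Longrightarrow> admissible t"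
  unfolding admissible_def by (meson ereal_less_eq(3) le_less_trans less_le_trans)

lemma admissible_exists: "\<exists>\<theta>. admissible \<theta>"
  using ereal_dense2[OF theta_lt] unfolding admissible_def by blast

lemma admissible_interior:
  assumes "admissible \<theta>"
  obtains c0 c1 where "admissible c0" "admissible c1" "c0 < \<theta>" "\<theta> < c1"
proof -
  obtain c1 where "ereal \<theta> < ereal c1" "ereal c1 < ts"
    using ereal_dense2 assms unfolding admissible_def by blast
  moreover obtain c0 where "ti < ereal c0" "ereal c0 < ereal \<theta>"
    using ereal_dense2 assms unfolding admissible_def by blast
  moreover have "ti < ereal c1" "ereal c0 < ts"
    using calculation assms unfolding admissible_def by (meson less_trans)+
  ultimately show thesis
    using that[of c0 c1] unfolding admissible_def by auto
qed

lemma theta_sup_eq_SUP: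
  assumes "wmax = \<infinity>"
  shows "ts = (SUP n. ereal (ln (f (int (Suc n)))))"
proof -
  have "incseq (\<lambda>n. ereal (ln (f (int (Suc n)))))"
  proof (rule incseq_SucI)
    fix n
    have "f (int (Suc n)) \<le> f (int (Suc (Suc n)))"
      using mem_I_nonneg[OF assms] by (intro mono_onD[OF f_mono]) auto
    moreover have "0 < f (int (Suc n))"
      using f_pos_above[OF mem_I_nonneg[OF assms] zero_mem_I] by simp
    ultimately show "ereal (ln (f (int (Suc n)))) \<le> ereal (ln (f (int (Suc (Suc n)))))"
      using ln_mono ereal_less_eq(3) by blast
  qed
  hence "(\<lambda>n. ereal (ln (f (int (Suc n))))) \<longlonglongrightarrow> (SUP n. ereal (ln (f (int (Suc n)))))"
    by (rule LIMSEQ_SUP)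
  hence "(\<lambda>n. ereal (ln (f (int n)))) \<longlonglongrightarrow> (SUP n. ereal (ln (f (int (Suc n)))))"
    by (rule LIMSEQ_imp_Suc)
  thus ?thesis unfolding theta_sup_def using assms by (simp add: limI)
qed

lemma theta_inf_eq_INF:
  assumes "wmin = -\<infinity>"
  shows "ti = (INF n. ereal (ln (f (- int n))))"
proof -
  have "decseq (\<lambda>n. ereal (ln (f (- int n))))"
  proof (rule decseq_SucI)
    fix n
    have "f (- int (Suc n)) \<le> f (- int n)"
      using mem_I_nonpos[OF assms] by (intro mono_onD[OF f_mono]) auto
    moreover have "0 < f (- int (Suc n))"
      using f_pos_nonpos[OF assms] mem_I_nonpos[OF assms] by simp
    ultimately show "ereal (ln (f (- int (Suc n)))) \<le> ereal (ln (f (- int n)))"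
      using ln_mono ereal_less_eq(3) by blast
  qed
  hence "(\<lambda>n. ereal (ln (f (- int n)))) \<longlonglongrightarrow> (INF n. ereal (ln (f (- int n))))"
    by (rule LIMSEQ_INF)
  thus ?thesis unfolding theta_inf_def using assms by (simp add: limI)
qed

lemma theta_sup_cases: "ts = \<infinity> \<or> (wmax = \<infinity> \<and> (\<exists>s. ts = ereal s))"
  using theta_lt by (cases ts) (auto simp: theta_sup_def split: if_splits)

lemma theta_inf_cases: "ti = -\<infinity> \<or> (wmin = -\<infinity> \<and> (\<exists>s. ti = ereal s))"
  using theta_lt by (cases ti) (auto simp: theta_inf_def split: if_splits)

lemma exp_less_f_eventually:
  assumes "wmax = \<infinity>" "ereal c < ts"
  obtains N :: nat where "\<And>n. N \<le> n \<Longrightarrow> exp c < f (int n)"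
proof -
  have "ereal c < (SUP n. ereal (ln (f (int (Suc n)))))"
    using assms theta_sup_eq_SUP by simp
  then obtain m where "ereal c < ereal (ln (f (int (Suc m))))"
    by (meson less_SUP_iff)
  hence "c < ln (f (int (Suc m)))" by simp
  moreover have "0 < f (int (Suc m))"
    using f_pos_above[OF mem_I_nonneg[OF assms(1)] zero_mem_I] by simp
  ultimately have less: "exp c < f (int (Suc m))"
    by (metis exp_less_cancel_iff exp_ln)
  show thesis
  proof (rule that)
    fix n assume "Suc m \<le> n"
    hence "f (int (Suc m)) \<le> f (int n)"
      using mem_I_nonneg[OF assms(1)] by (intro mono_onD[OF f_mono]) auto
    thus "exp c < f (int n)" using less by linarith
  qed
qed

lemma f_less_exp_eventually:
  assumes "wmin = -\<infinity>" "ti < ereal c"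
  obtains N :: nat where "\<And>n. N \<le> n \<Longrightarrow> f (- int n) < exp c"
proof -
  have "(INF n. ereal (ln (f (- int n)))) < ereal c"
    using assms theta_inf_eq_INF by simp
  then obtain m where "ereal (ln (f (- int m))) < ereal c"
    by (meson INF_less_iff)
  hence "ln (f (- int m)) < c" by simp
  moreover have "0 < f (- int m)"
    using f_pos_nonpos[OF assms(1)] mem_I_nonpos[OF assms(1)] by simp
  ultimately have less: "f (- int m) < exp c"
    by (metis exp_less_cancel_iff exp_ln)
  show thesis
  proof (rule that)
    fix n assume "m \<le> n"
    hence "f (- int n) \<le> f (- int m)"
      using mem_I_nonpos[OF assms(1)] by (intro mono_onD[OF f_mono]) auto
    thus "f (- int n) < exp c" using less by linarith
  qed
qed

lemma f_le_exp_theta_sup: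
  assumes "wmax = \<infinity>" "ts = ereal s" "1 \<le> y"
  shows "f y \<le> exp s"
proof -
  have "ereal (ln (f (int (Suc (nat (y - 1)))))) \<le> ereal s"
    using assms(1,2) theta_sup_eq_SUP by (metis SUP_upper UNIV_I)
  moreover have "int (Suc (nat (y - 1))) = y" "0 < f y"
    using assms(3) f_pos_above[OF mem_I_nonneg[OF assms(1)] zero_mem_I] by auto
  ultimately show ?thesis by (metis ereal_less_eq(3) exp_le_cancel_iff exp_ln)
qed

lemma exp_theta_inf_le_f:
  assumes "wmin = -\<infinity>" "ti = ereal s" "y \<le> 0"
  shows "exp s \<le> f y"
proof -
  have "ereal s \<le> ereal (ln (f (- int (nat (- y)))))"
    using assms(1,2) theta_inf_eq_INF by (metis INF_lower UNIV_I)
  moreover have "- int (nat (- y)) = y" "0 < f y"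
    using assms(3) f_pos_nonpos[OF assms(1) mem_I_nonpos[OF assms(1)]] by auto
  ultimately show ?thesis by (metis ereal_less_eq(3) exp_le_cancel_iff exp_ln)
qed

lemma weight_antimono_above:
  assumes "n \<in> I" and f_large: "\<And>y. n \<le> y \<Longrightarrow> y + 1 \<in> I \<Longrightarrow> exp c \<le> f (y + 1)"
    and "n \<le> z" "z \<in> I"
  shows "weight c z \<le> weight c n"
  using assms(3,4)
proof (induction z rule: int_ge_induct[consumes 1, case_names base step])
  case (step z)
  have z: "z \<in> I" using mem_I_between[OF assms(1) step.prems] step.hyps by simp
  have "0 < f (z + 1)" using f_pos_above[OF step.prems z] by simp
  hence "exp c / f (z + 1) \<le> 1" using f_large[OF step.hyps step.prems] by simp
  hence "weight c z * (exp c / f (z + 1)) \<le> weight c z"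
    using weight_nonneg[OF z] by (rule mult_left_le)
  thus ?case using weight_succ[OF z step.prems] step.IH[OF z] by simp
qed simp

lemma weight_mono_below:
  assumes "n \<in> I" and f_small: "\<And>y. y < n \<Longrightarrow> y \<in> I \<Longrightarrow> f (y + 1) \<le> exp c"
    and "z \<le> n" "z \<in> I"
  shows "weight c z \<le> weight c n"
  using assms(3,4)
proof (induction z rule: int_le_induct)
  case (step z)
  have z: "z \<in> I" using mem_I_between[OF step.prems assms(1)] step.hyps by simp
  have "0 < f z" using f_pos_above[OF z step.prems] by simp
  have "weight c (z - 1) = weight c z * (f z / exp c)"
    using weight_succ[of "z - 1" c] step.prems z \<open>0 < f z\<close> by (simp add: field_simps)
  also have "\<dots> \<le> weight c z"
    using f_small[of "z - 1"] step.hyps step.prems weight_nonneg[OF z] by (intro mult_left_le) auto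
  also have "\<dots> \<le> weight c n" by (rule step.IH[OF z])
  finally show ?case .
qed simp

lemma weight_bounded_nonneg:
  assumes "ereal c < ts"
  obtains C where "\<And>z. z \<in> I \<Longrightarrow> 0 \<le> z \<Longrightarrow> weight c z \<le> C"
proof -
  obtain n where n: "0 \<le> n" "n \<in> I" "\<And>y. n \<le> y \<Longrightarrow> y + 1 \<in> I \<Longrightarrow> exp c \<le> f (y + 1)"
  proof (cases "wmax = \<infinity>")
    case True
    obtain N where N: "\<And>m. N \<le> m \<Longrightarrow> exp c < f (int m)"
      using exp_less_f_eventually[OF True assms] by blast
    have "exp c \<le> f (y + 1)" if "int N \<le> y" for y
    proof -
      have "N \<le> nat (y + 1)" using that by (simp add: le_nat_iff)
      thus ?thesis using N[of "nat (y + 1)"] that by simp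
    qed
    thus thesis using that[of "int N"] mem_I_nonneg[OF True] by simp
  next
    case False
    then obtain K where K: "1 \<le> K" "wmax = ereal (real_of_int K)" using wmax by auto
    have "y + 1 \<notin> I" if "K \<le> y" for y
      using that K(2) unfolding mem_I_iff by auto
    thus thesis using that[of K] K wmax_mem_I by auto
  qed
  have "weight c z \<le> (\<Sum>y\<in>{0..n}. weight c y)" if z: "z \<in> I" "0 \<le> z" for z
  proof -
    have le_sum: "weight c y \<le> (\<Sum>y\<in>{0..n}. weight c y)" if "y \<in> {0..n}" for y
      using that mem_I_between[OF zero_mem_I n(2)] by (intro member_le_sum weight_nonneg) auto
    show ?thesis
    proof (cases "z \<le> n")
      case True thus ?thesis using le_sum z by simp
    next
      case False
      hence "weight c z \<le> weight c n" using weight_antimono_above[OF n(2,3)] z by simp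
      also have "\<dots> \<le> (\<Sum>y\<in>{0..n}. weight c y)" using le_sum n(1) by simp
      finally show ?thesis .
    qed
  qed
  thus thesis by (rule that)
qed

lemma weight_bounded_nonpos:
  assumes "ti < ereal c"
  obtains C where "\<And>z. z \<in> I \<Longrightarrow> z \<le> 0 \<Longrightarrow> weight c z \<le> C"
proof -
  obtain n where n: "n \<le> 0" "n \<in> I" "\<And>y. y < n \<Longrightarrow> y \<in> I \<Longrightarrow> f (y + 1) \<le> exp c"
  proof (cases "wmin = -\<infinity>")
    case True
    obtain N where N: "\<And>m. N \<le> m \<Longrightarrow> f (- int m) < exp c"
      using f_less_exp_eventually[OF True assms] by blast
    have "f (y + 1) \<le> exp c" if "y < - int N" for y
    proof -
      have "N \<le> nat (- y - 1)" using that by (simp add: le_nat_iff)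
      thus ?thesis using N[of "nat (- y - 1)"] that by (simp add: add.commute)
    qed
    thus thesis using that[of "- int N"] mem_I_nonpos[OF True] by simp
  next
    case False
    then obtain k where k: "k \<le> 0" "wmin = ereal (real_of_int k)" using wmin by auto
    have "y \<notin> I" if "y < k" for y
      using that k(2) unfolding mem_I_iff by auto
    thus thesis using that[of k] k wmin_mem_I by auto
  qed
  have "weight c z \<le> (\<Sum>y\<in>{n..0}. weight c y)" if z: "z \<in> I" "z \<le> 0" for z
  proof -
    have le_sum: "weight c y \<le> (\<Sum>y\<in>{n..0}. weight c y)" if "y \<in> {n..0}" for y
      using that mem_I_between[OF n(2) zero_mem_I] by (intro member_le_sum weight_nonneg) auto
    show ?thesis
    proof (cases "n \<le> z")
      case True thus ?thesis using le_sum z by simp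
    next
      case False
      hence "weight c z \<le> weight c n" using weight_mono_below[OF n(2,3)] z by simp
      also have "\<dots> \<le> (\<Sum>y\<in>{n..0}. weight c y)" using le_sum n(1) by simp
      finally show ?thesis .
    qed
  qed
  thus thesis by (rule that)
qed

lemma weight_exp_decay:
  assumes "admissible \<theta>"
  obtains C \<epsilon> where "0 < \<epsilon>" "\<And>z. z \<in> I \<Longrightarrow> weight \<theta> z \<le> C * exp (- \<epsilon> * \<bar>real_of_int z\<bar>)"
proof -
  obtain c0 c1 where c: "admissible c0" "admissible c1" "c0 < \<theta>" "\<theta> < c1"
    using admissible_interior[OF assms] .
  obtain C1 where C1: "\<And>z. z \<in> I \<Longrightarrow> 0 \<le> z \<Longrightarrow> weight c1 z \<le> C1"
    using weight_bounded_nonneg[of c1] c(2) unfolding admissible_def by blast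
  obtain C0 where C0: "\<And>z. z \<in> I \<Longrightarrow> z \<le> 0 \<Longrightarrow> weight c0 z \<le> C0"
    using weight_bounded_nonpos[of c0] c(1) unfolding admissible_def by blast
  define \<epsilon> where "\<epsilon> = min (c1 - \<theta>) (\<theta> - c0)"
  have "weight \<theta> z \<le> max C0 C1 * exp (- \<epsilon> * \<bar>real_of_int z\<bar>)" if z: "z \<in> I" for z
  proof (cases "0 \<le> z")
    case True
    have "\<epsilon> * real_of_int z \<le> (c1 - \<theta>) * real_of_int z"
      using True by (intro mult_right_mono) (auto simp: \<epsilon>_def)
    hence "(\<theta> - c1) * real_of_int z \<le> - \<epsilon> * \<bar>real_of_int z\<bar>"
      using True by (simp add: algebra_simps)
    hence "weight c1 z * exp ((\<theta> - c1) * real_of_int z) \<le> max C0 C1 * exp (- \<epsilon> * \<bar>real_of_int z\<bar>)"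
      using C1[OF z True] order_trans[OF weight_nonneg[OF z] C1[OF z True]]
      by (intro mult_mono) (auto simp: weight_nonneg[OF z])
    thus ?thesis using weight_shift[of \<theta> z c1] by simp
  next
    case False
    have "(\<theta> - c0) * real_of_int z \<le> \<epsilon> * real_of_int z"
      using False by (intro mult_right_mono_neg) (auto simp: \<epsilon>_def)
    hence "(\<theta> - c0) * real_of_int z \<le> - \<epsilon> * \<bar>real_of_int z\<bar>"
      using False by (simp add: algebra_simps)
    hence "weight c0 z * exp ((\<theta> - c0) * real_of_int z) \<le> max C0 C1 * exp (- \<epsilon> * \<bar>real_of_int z\<bar>)"
      using C0[OF z] False order_trans[OF weight_nonneg[OF z] C0[OF z]]
      by (intro mult_mono) (auto simp: weight_nonneg[OF z])
    thus ?thesis using weight_shift[of \<theta> z c0] by simp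
  qed
  moreover have "0 < \<epsilon>" using c by (simp add: \<epsilon>_def)
  ultimately show thesis using that by blast
qed

lemma summable_weight:
  assumes "admissible \<theta>" "poly_bounded g"
  shows "(\<lambda>z. g z * weight \<theta> z) summable_on I"
proof -
  obtain C \<epsilon> where \<epsilon>: "0 < \<epsilon>" and C: "\<And>z. z \<in> I \<Longrightarrow> weight \<theta> z \<le> C * exp (- \<epsilon> * \<bar>real_of_int z\<bar>)"
    using weight_exp_decay[OF assms(1)] by blast
  obtain D k where D: "\<And>z. \<bar>g z\<bar> \<le> D * (1 + \<bar>real_of_int z\<bar>) ^ k"
    using assms(2) unfolding poly_bounded_def by blast
  have "(\<lambda>z. D * C * ((1 + \<bar>real_of_int z\<bar>) ^ k * exp (- \<epsilon> * \<bar>real_of_int z\<bar>))) summable_on I"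
    using summable_on_subset[OF summable_on_poly_exp_neg_abs[OF \<epsilon>]]
    by (intro summable_on_cmult_right) auto
  hence "(\<lambda>z. norm (g z * weight \<theta> z)) summable_on I"
  proof (rule summable_on_comparison_test)
    fix z assume z: "z \<in> I"
    have "norm (g z * weight \<theta> z) = \<bar>g z\<bar> * weight \<theta> z"
      using weight_nonneg[OF z] by (simp add: abs_mult)
    also have "\<dots> \<le> (D * (1 + \<bar>real_of_int z\<bar>) ^ k) * (C * exp (- \<epsilon> * \<bar>real_of_int z\<bar>))"
      using D[of z] C[OF z] weight_nonneg[OF z] by (intro mult_mono) auto
    finally show "norm (g z * weight \<theta> z)
        \<le> D * C * ((1 + \<bar>real_of_int z\<bar>) ^ k * exp (- \<epsilon> * \<bar>real_of_int z\<bar>))"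
      by (simp add: mult_ac)
  qed simp
  thus ?thesis by (rule abs_summable_summable)
qed

definition wsum :: "(int \<Rightarrow> real) \<Rightarrow> real \<Rightarrow> real" where
  "wsum g \<theta> = (\<Sum>\<^sub>\<infinity>z\<in>I. g z * weight \<theta> z)"

abbreviation Z :: "real \<Rightarrow> real" where
  "Z \<equiv> Zpart wmin wmax f"

definition expect :: "(int \<Rightarrow> real) \<Rightarrow> real \<Rightarrow> real" where
  "expect g \<theta> = wsum g \<theta> / Z \<theta>"

abbreviation mean :: "real \<Rightarrow> real" where
  "mean \<equiv> expect real_of_int"

definition variance :: "real \<Rightarrow> real" where
  "variance \<theta> = expect (\<lambda>z. (real_of_int z - mean \<theta>)\<^sup>2) \<theta>"

lemma Zpart_eq_wsum: "Z \<theta> = wsum (\<lambda>_. 1) \<theta>"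
  by (simp add: Zpart_def wsum_def weight_def)

lemma mu_theta_eq: "mu_theta wmin wmax f \<theta> z = weight \<theta> z / Z \<theta>"
  by (simp add: mu_theta_def weight_def)

lemma wsum_add:
  "admissible \<theta> \<Longrightarrow> poly_bounded g \<Longrightarrow> poly_bounded h \<Longrightarrow> wsum (\<lambda>z. g z + h z) \<theta> = wsum g \<theta> + wsum h \<theta>"
  unfolding wsum_def distrib_right by (intro infsum_add summable_weight)

lemma wsum_cmult: "wsum (\<lambda>z. c * g z) \<theta> = c * wsum g \<theta>"
  unfolding wsum_def by (simp add: mult.assoc infsum_cmult_right')

lemma wsum_nonneg: "(\<And>z. z \<in> I \<Longrightarrow> 0 \<le> g z) \<Longrightarrow> 0 \<le> wsum g \<theta>"
  unfolding wsum_def by (intro infsum_nonneg mult_nonneg_nonneg weight_nonneg)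

lemma wsum_pos:
  assumes "admissible \<theta>" "poly_bounded g" "\<And>z. z \<in> I \<Longrightarrow> 0 \<le> g z" "x \<in> I" "0 < g x"
  shows "0 < wsum g \<theta>"
proof -
  have "0 < g x * weight \<theta> x" using assms(4,5) weight_pos by simp
  also have "\<dots> = (\<Sum>z\<in>{x}. g z * weight \<theta> z)" by simp
  also have "\<dots> \<le> wsum g \<theta>"
    unfolding wsum_def using assms by (intro finite_sum_le_infsum summable_weight mult_nonneg_nonneg weight_nonneg) auto
  finally show ?thesis .
qed

lemma Zpart_pos: "admissible \<theta> \<Longrightarrow> 0 < Z \<theta>"
  unfolding Zpart_eq_wsum by (rule wsum_pos[of _ _ 0]) auto

lemma expect_add:
  "admissible \<theta> \<Longrightarrow> poly_bounded g \<Longrightarrow> poly_bounded h \<Longrightarrow> expect (\<lambda>z. g z + h z) \<theta> = expect g \<theta> + expect h \<theta>"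
  unfolding expect_def by (simp add: wsum_add add_divide_distrib)

lemma expect_cmult: "expect (\<lambda>z. c * g z) \<theta> = c * expect g \<theta>"
  unfolding expect_def by (simp add: wsum_cmult)

lemma expect_const: "admissible \<theta> \<Longrightarrow> expect (\<lambda>z. c) \<theta> = c"
  using wsum_cmult[of c "\<lambda>_. 1" \<theta>] Zpart_pos[of \<theta>] by (simp add: expect_def Zpart_eq_wsum)

lemma expect_nonneg: "admissible \<theta> \<Longrightarrow> (\<And>z. z \<in> I \<Longrightarrow> 0 \<le> g z) \<Longrightarrow> 0 \<le> expect g \<theta>"
  unfolding expect_def using wsum_nonneg Zpart_pos by (simp add: less_imp_le)

lemma mean_theta_eq: "mean_theta wmin wmax f \<theta> = mean \<theta>"
proof -
  have "mean_theta wmin wmax f \<theta> = (\<Sum>\<^sub>\<infinity>z\<in>I. real_of_int z * weight \<theta> z * (1 / Z \<theta>))"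
    by (simp add: mean_theta_def mu_theta_eq)
  also have "\<dots> = mean \<theta>"
    by (subst infsum_cmult_left') (simp add: expect_def wsum_def)
  finally show ?thesis .
qed

lemma has_real_derivative_wsum:
  assumes "admissible \<theta>" "poly_bounded g"
  shows "((\<lambda>t. wsum g t) has_real_derivative wsum (\<lambda>z. real_of_int z * g z) \<theta>) (at \<theta>)"
proof -
  obtain c0 c1 where c: "admissible c0" "admissible c1" "c0 < \<theta>" "\<theta> < c1"
    using admissible_interior[OF assms(1)] .
  define \<delta> where "\<delta> = min (c1 - \<theta>) (\<theta> - c0)"
  define c where "c z = g z / ffact f z" for z
  have series_term: "c z * exp (t * real_of_int z) = g z * weight t z" for t z
    by (simp add: c_def weight_def)
  have "(\<lambda>z. (1 + \<bar>real_of_int z\<bar>) * \<bar>c z\<bar> * exp (t * real_of_int z)) summable_on I"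
    if "\<bar>t - \<theta>\<bar> \<le> \<delta>" for t
  proof -
    have "admissible t"
      by (rule admissible_between[OF c(1,2)]) (use that in \<open>auto simp: \<delta>_def\<close>)
    hence "(\<lambda>z. ((1 + \<bar>real_of_int z\<bar>) * \<bar>g z\<bar>) * weight t z) summable_on I"
      using assms(2) by (intro summable_weight) auto
    moreover have "((1 + \<bar>real_of_int z\<bar>) * \<bar>g z\<bar>) * weight t z
        = (1 + \<bar>real_of_int z\<bar>) * \<bar>c z\<bar> * exp (t * real_of_int z)" if "z \<in> I" for z
      using ffact_pos[OF that] by (simp add: c_def weight_def abs_divide)
    ultimately show ?thesis by (simp cong: summable_on_cong)
  qed
  hence "((\<lambda>t. \<Sum>\<^sub>\<infinity>z\<in>I. c z * exp (t * real_of_int z)) has_real_derivative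
           (\<Sum>\<^sub>\<infinity>z\<in>I. real_of_int z * c z * exp (\<theta> * real_of_int z))) (at \<theta>)"
    using c by (intro has_real_derivative_exp_series[of \<delta>]) (auto simp: \<delta>_def)
  thus ?thesis unfolding series_term mult.assoc wsum_def .
qed

lemma has_real_derivative_Zpart:
  "admissible \<theta> \<Longrightarrow> (Z has_real_derivative wsum real_of_int \<theta>) (at \<theta>)"
  using has_real_derivative_wsum[of \<theta> "\<lambda>_. 1"] by (simp add: Zpart_eq_wsum[abs_def])

lemma has_real_derivative_expect:
  assumes "admissible \<theta>" "poly_bounded g"
  shows "((\<lambda>t. expect g t) has_real_derivative
           expect (\<lambda>z. real_of_int z * g z) \<theta> - mean \<theta> * expect g \<theta>) (at \<theta>)"
proof -
  have "Z \<theta> \<noteq> 0" using Zpart_pos[OF assms(1)] by simp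
  from DERIV_divide[OF has_real_derivative_wsum[OF assms] has_real_derivative_Zpart[OF assms(1)] this]
  show ?thesis
    using \<open>Z \<theta> \<noteq> 0\<close> by (simp add: expect_def[abs_def] field_simps)
qed

lemma expect_square_sub:
  assumes "admissible \<theta>"
  shows "expect (\<lambda>z. (real_of_int z - m)\<^sup>2) \<theta>
    = expect (\<lambda>z. real_of_int z * real_of_int z) \<theta> - 2 * m * mean \<theta> + m * m"
proof -
  have "(\<lambda>z. (real_of_int z - m)\<^sup>2)
      = (\<lambda>z. real_of_int z * real_of_int z + ((- 2 * m) * real_of_int z + m * m))"
    by (simp add: power2_eq_square algebra_simps)
  moreover have "expect (\<lambda>z. real_of_int z * real_of_int z + ((- 2 * m) * real_of_int z + m * m)) \<theta>
      = expect (\<lambda>z. real_of_int z * real_of_int z) \<theta> + ((- 2 * m) * mean \<theta> + m * m)"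
    using assms by (simp only: expect_add expect_cmult expect_const poly_bounded_mult
        poly_bounded_add poly_bounded_id poly_bounded_const)
  ultimately show ?thesis by simp
qed

lemma variance_eq_moments:
  "admissible \<theta> \<Longrightarrow> variance \<theta> = expect (\<lambda>z. real_of_int z * real_of_int z) \<theta> - mean \<theta> * mean \<theta>"
  unfolding variance_def by (simp add: expect_square_sub)

lemma variance_pos:
  assumes "admissible \<theta>"
  shows "0 < variance \<theta>"
proof -
  obtain x where "x \<in> I" "0 < (real_of_int x - mean \<theta>)\<^sup>2"
  proof (cases "mean \<theta> = 0")
    case True thus thesis using that[of 1] by simp
  next
    case False thus thesis using that[of 0] by simp
  qed
  hence "0 < wsum (\<lambda>z. (real_of_int z - mean \<theta>)\<^sup>2) \<theta>"
    using assms by (intro wsum_pos) (auto simp: power2_eq_square)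
  thus ?thesis
    using Zpart_pos[OF assms] by (simp add: variance_def expect_def)
qed

lemma has_real_derivative_mean: "admissible \<theta> \<Longrightarrow> (mean has_real_derivative variance \<theta>) (at \<theta>)"
  using has_real_derivative_expect[of \<theta> real_of_int] by (simp add: variance_eq_moments)

lemma mean_strict_mono:
  assumes "admissible a" "admissible b" "a < b"
  shows "mean a < mean b"
  using assms(3)
proof (rule DERIV_pos_imp_increasing)
  fix t assume "a \<le> t" "t \<le> b"
  hence "admissible t" by (rule admissible_between[OF assms(1,2)])
  thus "\<exists>y. (mean has_real_derivative y) (at t) \<and> 0 < y"
    using has_real_derivative_mean variance_pos by blast
qed

lemma continuous_on_mean:
  assumes "admissible a" "admissible b"
  shows "continuous_on {a..b} mean"
proof (rule DERIV_continuous_on)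
  fix t assume "t \<in> {a..b}"
  hence "admissible t" by (intro admissible_between[OF assms]) auto
  thus "(mean has_real_derivative variance t) (at t within {a..b})"
    by (rule has_field_derivative_at_within[OF has_real_derivative_mean])
qed

section \<open>The inverse of the mean map\<close>

lemma has_real_derivative_tilted_Zpart:
  assumes "admissible \<theta>"
  shows "((\<lambda>t. Z t * exp (- \<rho> * t)) has_real_derivative Z \<theta> * exp (- \<rho> * \<theta>) * (mean \<theta> - \<rho>)) (at \<theta>)"
proof -
  have "wsum real_of_int \<theta> = Z \<theta> * mean \<theta>"
    using Zpart_pos[OF assms] by (simp add: expect_def)
  thus ?thesis
    by (auto intro!: derivative_eq_intros has_real_derivative_Zpart[OF assms] simp: algebra_simps)
qed

lemma tilted_Zpart_antimono:
  assumes "admissible a" "admissible b" "a \<le> b" "\<And>t. a \<le> t \<Longrightarrow> t \<le> b \<Longrightarrow> mean t \<le> \<rho>"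
  shows "Z b * exp (- \<rho> * b) \<le> Z a * exp (- \<rho> * a)"
  using assms(3)
proof (rule DERIV_nonpos_imp_nonincreasing)
  fix t assume t: "a \<le> t" "t \<le> b"
  hence "admissible t" by (rule admissible_between[OF assms(1,2)])
  moreover have "Z t * exp (- \<rho> * t) * (mean t - \<rho>) \<le> 0"
    using Zpart_pos[OF \<open>admissible t\<close>] assms(4)[OF t] by (simp add: mult_nonneg_nonpos)
  ultimately show "\<exists>y. ((\<lambda>t. Z t * exp (- \<rho> * t)) has_real_derivative y) (at t) \<and> y \<le> 0"
    using has_real_derivative_tilted_Zpart by blast
qed

lemma tilted_Zpart_mono:
  assumes "admissible a" "admissible b" "a \<le> b" "\<And>t. a \<le> t \<Longrightarrow> t \<le> b \<Longrightarrow> \<rho> \<le> mean t"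
  shows "Z a * exp (- \<rho> * a) \<le> Z b * exp (- \<rho> * b)"
  using assms(3)
proof (rule DERIV_nonneg_imp_nondecreasing)
  fix t assume t: "a \<le> t" "t \<le> b"
  hence "admissible t" by (rule admissible_between[OF assms(1,2)])
  moreover have "0 \<le> Z t * exp (- \<rho> * t) * (mean t - \<rho>)"
    using Zpart_pos[OF \<open>admissible t\<close>] assms(4)[OF t] by simp
  ultimately show "\<exists>y. ((\<lambda>t. Z t * exp (- \<rho> * t)) has_real_derivative y) (at t) \<and> 0 \<le> y"
    using has_real_derivative_tilted_Zpart by blast
qed

lemma sum_weight_le_Zpart:
  assumes "admissible \<theta>" "finite F" "F \<subseteq> I"
  shows "(\<Sum>z\<in>F. weight \<theta> z) \<le> Z \<theta>"
proof -
  have "weight \<theta> summable_on I"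
    using summable_weight[OF assms(1), of "\<lambda>_. 1"] by simp
  from finite_sum_le_infsum[OF this assms(2,3)] show ?thesis
    unfolding Zpart_eq_wsum wsum_def by (simp add: weight_nonneg)
qed

lemma tilted_weight_large:
  assumes "n \<in> I" "0 < K" "ln K + ln (ffact f n) < \<theta> * (real_of_int n - \<rho>)"
  shows "K < weight \<theta> n * exp (- \<rho> * \<theta>)"
proof -
  have "K * ffact f n = exp (ln K + ln (ffact f n))"
    using assms(2) ffact_pos[OF assms(1)] by (simp add: exp_add)
  also have "\<dots> < exp (\<theta> * (real_of_int n - \<rho>))"
    using assms(3) by simp
  also have "\<dots> = weight \<theta> n * exp (- \<rho> * \<theta>) * ffact f n"
    using ffact_pos[OF assms(1)] by (simp add: weight_def mult_exp_exp algebra_simps)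
  finally show ?thesis
    using ffact_pos[OF assms(1)] by simp
qed

lemma one_le_weight_theta_sup:
  assumes "wmax = \<infinity>" "ts = ereal s" "0 \<le> z"
  shows "1 \<le> weight s z"
proof -
  have "(\<Prod>y\<in>{1..z}. f y) \<le> (\<Prod>y\<in>{1..z}. exp s)"
    using f_le_exp_theta_sup[OF assms(1,2)] f_pos_above[OF mem_I_nonneg[OF assms(1)] zero_mem_I]
    by (intro prod_mono) (auto simp: less_imp_le)
  also have "\<dots> = exp (s * real_of_int z)"
    using assms(3) by (simp add: exp_of_nat_mult[symmetric] mult.commute)
  finally show ?thesis
    using assms ffact_pos[OF mem_I_nonneg[OF assms(1,3)]] by (simp add: weight_def ffact_def)
qed

lemma one_le_weight_theta_inf:
  assumes "wmin = -\<infinity>" "ti = ereal s" "z \<le> 0"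
  shows "1 \<le> weight s z"
proof -
  have "exp (- s * real_of_int z) = (\<Prod>y\<in>{z + 1..0}. exp s)"
    using assms(3) by (simp add: exp_of_nat_mult[symmetric] mult.commute)
  also have "\<dots> \<le> (\<Prod>y\<in>{z + 1..0}. f y)"
    using exp_theta_inf_le_f[OF assms(1,2)] by (intro prod_mono) auto
  finally have le: "exp (- s * real_of_int z) \<le> (\<Prod>y\<in>{z + 1..0}. f y)" .
  have "1 = exp (s * real_of_int z) * exp (- s * real_of_int z)"
    by (simp add: mult_exp_exp)
  also have "\<dots> \<le> exp (s * real_of_int z) * (\<Prod>y\<in>{z + 1..0}. f y)"
    using le by (intro mult_left_mono) auto
  finally show ?thesis
    using assms(3) by (cases "z = 0") (simp_all add: weight_def ffact_def)
qed

lemma exists_mem_I_greater: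
  assumes "ereal \<rho> < wmax"
  obtains n where "n \<in> I" "\<rho> < real_of_int n"
proof (cases "wmax = \<infinity>")
  case True
  have "\<rho> < real_of_int (max 0 (\<lfloor>\<rho>\<rfloor> + 1))" by linarith
  moreover have "max 0 (\<lfloor>\<rho>\<rfloor> + 1) \<in> I" using mem_I_nonneg[OF True] by simp
  ultimately show thesis by (rule that[rotated])
next
  case False
  then obtain k where "wmax = ereal (real_of_int k)" using wmax by auto
  thus thesis using that[of k] wmax_mem_I assms by auto
qed

lemma large_tilted_weight_above:
  assumes "ts = \<infinity>" "n \<in> I" "\<rho> < real_of_int n" "admissible \<theta>0" "0 < K"
  obtains \<theta> where "admissible \<theta>" "\<theta>0 \<le> \<theta>" "K < weight \<theta> n * exp (- \<rho> * \<theta>)"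
proof -
  define \<theta> where "\<theta> = max \<theta>0 ((ln K + ln (ffact f n) + 1) / (real_of_int n - \<rho>))"
  have "\<theta>0 \<le> \<theta>" by (simp add: \<theta>_def)
  hence "ti < ereal \<theta>"
    using assms(4) unfolding admissible_def by (meson ereal_less_eq(3) less_le_trans)
  hence "admissible \<theta>" using assms(1) by (simp add: admissible_def)
  have "(ln K + ln (ffact f n) + 1) / (real_of_int n - \<rho>) \<le> \<theta>" by (simp add: \<theta>_def)
  hence "ln K + ln (ffact f n) + 1 \<le> \<theta> * (real_of_int n - \<rho>)"
    using assms(3) by (simp add: pos_divide_le_eq)
  hence "K < weight \<theta> n * exp (- \<rho> * \<theta>)"
    by (intro tilted_weight_large[OF assms(2,5)]) simp
  with \<open>admissible \<theta>\<close> \<open>\<theta>0 \<le> \<theta>\<close> show thesis by (rule that)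
qed

lemma large_tilted_sum_near_theta_sup:
  assumes "wmax = \<infinity>" "ts = ereal s" "admissible \<theta>0" "K * exp (\<rho> * s) < real (N + 1)"
  obtains \<theta> where "admissible \<theta>" "\<theta>0 \<le> \<theta>" "K < (\<Sum>z\<in>{0..int N}. weight \<theta> z) * exp (- \<rho> * \<theta>)"
proof -
  have "\<theta>0 < s" using assms(3) assms(2) unfolding admissible_def by simp
  define g where "g t = (\<Sum>z\<in>{0..int N}. weight t z) * exp (- \<rho> * t)" for t
  have "K < g s"
  proof -
    have "K * exp (\<rho> * s) < (\<Sum>z\<in>{0..int N}. 1)" using assms(4) by simp
    also have "\<dots> \<le> (\<Sum>z\<in>{0..int N}. weight s z)"
      using one_le_weight_theta_sup[OF assms(1,2)] by (intro sum_mono) auto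
    finally have "K * exp (\<rho> * s) * exp (- \<rho> * s) < (\<Sum>z\<in>{0..int N}. weight s z) * exp (- \<rho> * s)"
      by (intro mult_strict_right_mono) auto
    thus ?thesis by (simp add: g_def mult.assoc flip: exp_add)
  qed
  moreover have "isCont g s" unfolding g_def weight_def
    using ffact_pos mem_I_nonneg[OF assms(1)] by (intro continuous_intros) force
  hence "(g \<longlongrightarrow> g s) (at_left s)" by (simp add: isCont_def filterlim_at_split)
  ultimately have "eventually (\<lambda>t. K < g t \<and> t \<in> {\<theta>0<..<s}) (at_left s)"
    using eventually_at_left_real[OF \<open>\<theta>0 < s\<close>] order_tendstoD(1) eventually_conj by blast
  then obtain \<theta> where "K < g \<theta>" "\<theta>0 < \<theta>" "\<theta> < s"
    using eventually_happens[of _ "at_left s"] trivial_limit_at_left_real by fastforce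
  moreover have "admissible \<theta>" using assms(2,3) \<open>\<theta> < s\<close> \<open>\<theta>0 < \<theta>\<close>
    unfolding admissible_def by (auto intro: less_trans[of ti "ereal \<theta>0"])
  ultimately show thesis
    using that[of \<theta>] by (simp add: g_def)
qed

lemma tilted_weights_unbounded_above:
  assumes "ereal \<rho> < wmax" "admissible \<theta>0" "0 < K"
  obtains \<theta> F where "admissible \<theta>" "\<theta>0 \<le> \<theta>" "finite F" "F \<subseteq> I"
    "K < (\<Sum>z\<in>F. weight \<theta> z) * exp (- \<rho> * \<theta>)"
proof -
  consider "ts = \<infinity>" | s where "wmax = \<infinity>" "ts = ereal s"
    using theta_sup_cases by blast
  then show thesis
  proof cases
    case 1
    obtain n where "n \<in> I" "\<rho> < real_of_int n" using exists_mem_I_greater[OF assms(1)] .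
    moreover obtain \<theta> where "admissible \<theta>" "\<theta>0 \<le> \<theta>" "K < weight \<theta> n * exp (- \<rho> * \<theta>)"
      using large_tilted_weight_above[OF 1 calculation assms(2,3)] by blast
    ultimately show thesis using that[of \<theta> "{n}"] by simp
  next
    case 2
    define N where "N = nat \<lceil>K * exp (\<rho> * s)\<rceil>"
    have "K * exp (\<rho> * s) < real (N + 1)" unfolding N_def by linarith
    then obtain \<theta> where "admissible \<theta>" "\<theta>0 \<le> \<theta>"
      "K < (\<Sum>z\<in>{0..int N}. weight \<theta> z) * exp (- \<rho> * \<theta>)"
      using large_tilted_sum_near_theta_sup[OF 2 assms(2)] by blast
    moreover have "{0..int N} \<subseteq> I" using mem_I_nonneg[OF 2(1)] by auto
    ultimately show thesis using that by blast
  qed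
qed

lemma mean_exceeds:
  assumes "ereal \<rho> < wmax"
  obtains \<theta> where "admissible \<theta>" "\<rho> < mean \<theta>"
proof (rule ccontr)
  assume "\<not> thesis"
  with that have le: "\<And>\<theta>. admissible \<theta> \<Longrightarrow> mean \<theta> \<le> \<rho>"
    by (meson not_le)
  obtain \<theta>0 where \<theta>0: "admissible \<theta>0" using admissible_exists by blast
  then obtain \<theta> F where \<theta>: "admissible \<theta>" "\<theta>0 \<le> \<theta>" "finite F" "F \<subseteq> I"
    and large: "Z \<theta>0 * exp (- \<rho> * \<theta>0) < (\<Sum>z\<in>F. weight \<theta> z) * exp (- \<rho> * \<theta>)"
    using tilted_weights_unbounded_above[OF assms, of \<theta>0 "Z \<theta>0 * exp (- \<rho> * \<theta>0)"] Zpart_pos by auto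
  have "(\<Sum>z\<in>F. weight \<theta> z) * exp (- \<rho> * \<theta>) \<le> Z \<theta> * exp (- \<rho> * \<theta>)"
    using sum_weight_le_Zpart[OF \<theta>(1,3,4)] by simp
  also have "\<dots> \<le> Z \<theta>0 * exp (- \<rho> * \<theta>0)"
    using \<theta>0 \<theta>(1,2) by (intro tilted_Zpart_antimono le) (auto intro: admissible_between)
  finally show False using large by simp
qed

lemma exists_mem_I_less:
  assumes "wmin < ereal \<rho>"
  obtains n where "n \<in> I" "real_of_int n < \<rho>"
proof (cases "wmin = -\<infinity>")
  case True
  have "real_of_int (min 0 (\<lceil>\<rho>\<rceil> - 1)) < \<rho>" by linarith
  moreover have "min 0 (\<lceil>\<rho>\<rceil> - 1) \<in> I" using mem_I_nonpos[OF True] by simp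
  ultimately show thesis by (rule that[rotated])
next
  case False
  then obtain k where "wmin = ereal (real_of_int k)" using wmin by auto
  thus thesis using that[of k] wmin_mem_I assms by auto
qed

lemma large_tilted_weight_below:
  assumes "ti = -\<infinity>" "n \<in> I" "real_of_int n < \<rho>" "admissible \<theta>0" "0 < K"
  obtains \<theta> where "admissible \<theta>" "\<theta> \<le> \<theta>0" "K < weight \<theta> n * exp (- \<rho> * \<theta>)"
proof -
  define \<theta> where "\<theta> = min \<theta>0 (- (ln K + ln (ffact f n) + 1) / (\<rho> - real_of_int n))"
  have "\<theta> \<le> \<theta>0" by (simp add: \<theta>_def)
  hence "ereal \<theta> < ts"
    using assms(4) unfolding admissible_def by (meson ereal_less_eq(3) le_less_trans)
  hence "admissible \<theta>" using assms(1) by (simp add: admissible_def)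
  have "\<theta> \<le> - (ln K + ln (ffact f n) + 1) / (\<rho> - real_of_int n)" by (simp add: \<theta>_def)
  hence "ln K + ln (ffact f n) + 1 \<le> \<theta> * (real_of_int n - \<rho>)"
    using assms(3) by (simp add: le_divide_eq algebra_simps)
  hence "K < weight \<theta> n * exp (- \<rho> * \<theta>)"
    by (intro tilted_weight_large[OF assms(2,5)]) simp
  with \<open>admissible \<theta>\<close> \<open>\<theta> \<le> \<theta>0\<close> show thesis by (rule that)
qed

lemma large_tilted_sum_near_theta_inf:
  assumes "wmin = -\<infinity>" "ti = ereal s" "admissible \<theta>0" "K * exp (\<rho> * s) < real (N + 1)"
  obtains \<theta> where "admissible \<theta>" "\<theta> \<le> \<theta>0" "K < (\<Sum>z\<in>{- int N..0}. weight \<theta> z) * exp (- \<rho> * \<theta>)"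
proof -
  have "s < \<theta>0" using assms(2,3) unfolding admissible_def by simp
  define g where "g t = (\<Sum>z\<in>{- int N..0}. weight t z) * exp (- \<rho> * t)" for t
  have "K < g s"
  proof -
    have "K * exp (\<rho> * s) < (\<Sum>z\<in>{- int N..0}. 1)" using assms(4) by simp
    also have "\<dots> \<le> (\<Sum>z\<in>{- int N..0}. weight s z)"
      using one_le_weight_theta_inf[OF assms(1,2)] by (intro sum_mono) auto
    finally have "K * exp (\<rho> * s) * exp (- \<rho> * s) < (\<Sum>z\<in>{- int N..0}. weight s z) * exp (- \<rho> * s)"
      by (intro mult_strict_right_mono) auto
    thus ?thesis by (simp add: g_def mult.assoc flip: exp_add)
  qed
  moreover have "isCont g s" unfolding g_def weight_def
    using ffact_pos mem_I_nonpos[OF assms(1)] by (intro continuous_intros) force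
  hence "(g \<longlongrightarrow> g s) (at_right s)" by (simp add: isCont_def filterlim_at_split)
  ultimately have "eventually (\<lambda>t. K < g t \<and> t \<in> {s<..<\<theta>0}) (at_right s)"
    using eventually_at_right_real[OF \<open>s < \<theta>0\<close>] order_tendstoD(1) eventually_conj by blast
  then obtain \<theta> where "K < g \<theta>" "s < \<theta>" "\<theta> < \<theta>0"
    using eventually_happens[of _ "at_right s"] trivial_limit_at_right_real by fastforce
  moreover have "admissible \<theta>" using assms(2,3) \<open>s < \<theta>\<close> \<open>\<theta> < \<theta>0\<close>
    unfolding admissible_def by (auto intro: less_trans[of _ "ereal \<theta>0" ts])
  ultimately show thesis
    using that[of \<theta>] by (simp add: g_def)
qed

lemma tilted_weights_unbounded_below:
  assumes "wmin < ereal \<rho>" "admissible \<theta>0" "0 < K"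
  obtains \<theta> F where "admissible \<theta>" "\<theta> \<le> \<theta>0" "finite F" "F \<subseteq> I"
    "K < (\<Sum>z\<in>F. weight \<theta> z) * exp (- \<rho> * \<theta>)"
proof -
  consider "ti = -\<infinity>" | s where "wmin = -\<infinity>" "ti = ereal s"
    using theta_inf_cases by blast
  then show thesis
  proof cases
    case 1
    obtain n where "n \<in> I" "real_of_int n < \<rho>" using exists_mem_I_less[OF assms(1)] .
    moreover obtain \<theta> where "admissible \<theta>" "\<theta> \<le> \<theta>0" "K < weight \<theta> n * exp (- \<rho> * \<theta>)"
      using large_tilted_weight_below[OF 1 calculation assms(2,3)] by blast
    ultimately show thesis using that[of \<theta> "{n}"] by simp
  next
    case 2
    define N where "N = nat \<lceil>K * exp (\<rho> * s)\<rceil>"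
    have "K * exp (\<rho> * s) < real (N + 1)" unfolding N_def by linarith
    then obtain \<theta> where "admissible \<theta>" "\<theta> \<le> \<theta>0"
      "K < (\<Sum>z\<in>{- int N..0}. weight \<theta> z) * exp (- \<rho> * \<theta>)"
      using large_tilted_sum_near_theta_inf[OF 2 assms(2)] by blast
    moreover have "{- int N..0} \<subseteq> I" using mem_I_nonpos[OF 2(1)] by auto
    ultimately show thesis using that by blast
  qed
qed

lemma mean_below:
  assumes "wmin < ereal \<rho>"
  obtains \<theta> where "admissible \<theta>" "mean \<theta> < \<rho>"
proof (rule ccontr)
  assume "\<not> thesis"
  with that have ge: "\<And>\<theta>. admissible \<theta> \<Longrightarrow> \<rho> \<le> mean \<theta>"
    by (meson not_le)
  obtain \<theta>0 where \<theta>0: "admissible \<theta>0" using admissible_exists by blast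
  then obtain \<theta> F where \<theta>: "admissible \<theta>" "\<theta> \<le> \<theta>0" "finite F" "F \<subseteq> I"
    and large: "Z \<theta>0 * exp (- \<rho> * \<theta>0) < (\<Sum>z\<in>F. weight \<theta> z) * exp (- \<rho> * \<theta>)"
    using tilted_weights_unbounded_below[OF assms, of \<theta>0 "Z \<theta>0 * exp (- \<rho> * \<theta>0)"] Zpart_pos by auto
  have "(\<Sum>z\<in>F. weight \<theta> z) * exp (- \<rho> * \<theta>) \<le> Z \<theta> * exp (- \<rho> * \<theta>)"
    using sum_weight_le_Zpart[OF \<theta>(1,3,4)] by simp
  also have "\<dots> \<le> Z \<theta>0 * exp (- \<rho> * \<theta>0)"
    using \<theta>0 \<theta>(1,2) by (intro tilted_Zpart_mono ge) (auto intro: admissible_between)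
  finally show False using large by simp
qed

lemma theta_of_spec:
  assumes "wmin < ereal \<rho>" "ereal \<rho> < wmax"
  shows "admissible (theta_of wmin wmax f \<rho>)" "mean (theta_of wmin wmax f \<rho>) = \<rho>"
proof -
  obtain a where a: "admissible a" "mean a < \<rho>" using mean_below[OF assms(1)] .
  obtain b where b: "admissible b" "\<rho> < mean b" using mean_exceeds[OF assms(2)] .
  have "a \<le> b" using mean_strict_mono[OF b(1) a(1)] a(2) b(2) by fastforce
  then obtain x where x: "a \<le> x" "x \<le> b" "mean x = \<rho>"
    using IVT'[of mean a \<rho> b] a b continuous_on_mean[OF a(1) b(1)] by auto
  have "admissible x" by (rule admissible_between[OF a(1) b(1) x(1,2)])
  have "\<exists>!\<theta>. ti < ereal \<theta> \<and> ereal \<theta> < ts \<and> mean_theta wmin wmax f \<theta> = \<rho>"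
  proof (rule ex1I[of _ x])
    show "ti < ereal x \<and> ereal x < ts \<and> mean_theta wmin wmax f x = \<rho>"
      using \<open>admissible x\<close> x(3) by (simp add: admissible_def mean_theta_eq)
    fix y assume "ti < ereal y \<and> ereal y < ts \<and> mean_theta wmin wmax f y = \<rho>"
    hence "admissible y" "mean y = mean x" by (simp_all add: admissible_def mean_theta_eq x(3))
    thus "y = x" using mean_strict_mono \<open>admissible x\<close> by (metis less_irrefl linorder_neqE)
  qed
  from theI'[OF this] show "admissible (theta_of wmin wmax f \<rho>)" "mean (theta_of wmin wmax f \<rho>) = \<rho>"
    unfolding theta_of_def admissible_def mean_theta_eq by auto
qed

lemma theta_of_mono:
  assumes "wmin < ereal \<rho>1" "\<rho>1 \<le> \<rho>2" "ereal \<rho>2 < wmax"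
  shows "theta_of wmin wmax f \<rho>1 \<le> theta_of wmin wmax f \<rho>2"
proof (rule ccontr)
  have "ereal \<rho>1 < wmax" "wmin < ereal \<rho>2"
    using assms by (meson ereal_less_eq(3) le_less_trans less_le_trans)+
  note spec1 = theta_of_spec[OF assms(1) \<open>ereal \<rho>1 < wmax\<close>]
    and spec2 = theta_of_spec[OF \<open>wmin < ereal \<rho>2\<close> assms(3)]
  assume "\<not> ?thesis"
  with mean_strict_mono[OF spec2(1) spec1(1)] show False
    using spec1(2) spec2(2) assms(2) by simp
qed

section \<open>Monotonicity of the regression slope\<close>

definition slope :: "(int \<Rightarrow> real) \<Rightarrow> real \<Rightarrow> real" where
  "slope \<Phi> \<theta> = (expect (\<lambda>z. real_of_int z * \<Phi> z) \<theta> - mean \<theta> * expect \<Phi> \<theta>)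
     / (expect (\<lambda>z. real_of_int z * real_of_int z) \<theta> - mean \<theta> * mean \<theta>)"

text \<open>The derivative of \<open>slope \<Phi>\<close> is \<open>E[q \<Phi>] / Var\<^sup>2\<close> for this quadratic \<open>q\<close>, built from the
  variance and the third central moment.\<close>

definition skewness_quad :: "real \<Rightarrow> int \<Rightarrow> real" where
  "skewness_quad \<theta> z = variance \<theta> * (real_of_int z - mean \<theta>)\<^sup>2
     - expect (\<lambda>y. (real_of_int y - mean \<theta>) ^ 3) \<theta> * (real_of_int z - mean \<theta>) - (variance \<theta>)\<^sup>2"

lemma third_central_moment_eq:
  assumes "admissible \<theta>"
  shows "expect (\<lambda>y. (real_of_int y - mean \<theta>) ^ 3) \<theta>
    = expect (\<lambda>z. real_of_int z * (real_of_int z * real_of_int z)) \<theta>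
      - 3 * mean \<theta> * expect (\<lambda>z. real_of_int z * real_of_int z) \<theta> + 2 * mean \<theta> ^ 3"
proof -
  define m where "m = mean \<theta>"
  have "(\<lambda>y. (real_of_int y - m) ^ 3) = (\<lambda>z. real_of_int z * (real_of_int z * real_of_int z)
      + ((- 3 * m) * (real_of_int z * real_of_int z) + ((3 * m * m) * real_of_int z + (- (m ^ 3)))))"
    by (simp add: power3_eq_cube algebra_simps)
  moreover have "expect (\<lambda>z. real_of_int z * (real_of_int z * real_of_int z)
      + ((- 3 * m) * (real_of_int z * real_of_int z) + ((3 * m * m) * real_of_int z + (- (m ^ 3))))) \<theta>
    = expect (\<lambda>z. real_of_int z * (real_of_int z * real_of_int z)) \<theta>
      + ((- 3 * m) * expect (\<lambda>z. real_of_int z * real_of_int z) \<theta> + ((3 * m * m) * m + (- (m ^ 3))))"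
    using assms by (simp only: expect_add expect_cmult expect_const m_def poly_bounded_mult
        poly_bounded_add poly_bounded_id poly_bounded_const)
  ultimately show ?thesis by (simp add: m_def power3_eq_cube)
qed

lemma expect_skewness_quad_mult:
  assumes "admissible \<theta>" "poly_bounded \<Phi>"
  shows "expect (\<lambda>z. skewness_quad \<theta> z * \<Phi> z) \<theta>
    = variance \<theta> * expect (\<lambda>z. real_of_int z * (real_of_int z * \<Phi> z)) \<theta>
      + ((- 2 * variance \<theta> * mean \<theta> - expect (\<lambda>y. (real_of_int y - mean \<theta>) ^ 3) \<theta>)
          * expect (\<lambda>z. real_of_int z * \<Phi> z) \<theta>
      + (variance \<theta> * mean \<theta> * mean \<theta> + expect (\<lambda>y. (real_of_int y - mean \<theta>) ^ 3) \<theta> * mean \<theta>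
          - variance \<theta> * variance \<theta>) * expect \<Phi> \<theta>)"
proof -
  define D where "D = variance \<theta>"
  define m where "m = mean \<theta>"
  define \<kappa> where "\<kappa> = expect (\<lambda>y. (real_of_int y - mean \<theta>) ^ 3) \<theta>"
  have "(\<lambda>z. skewness_quad \<theta> z * \<Phi> z) = (\<lambda>z. D * (real_of_int z * (real_of_int z * \<Phi> z))
      + ((- 2 * D * m - \<kappa>) * (real_of_int z * \<Phi> z) + (D * m * m + \<kappa> * m - D * D) * \<Phi> z))"
    by (simp add: skewness_quad_def D_def m_def \<kappa>_def power2_eq_square algebra_simps)
  moreover have "expect (\<lambda>z. D * (real_of_int z * (real_of_int z * \<Phi> z))
      + ((- 2 * D * m - \<kappa>) * (real_of_int z * \<Phi> z) + (D * m * m + \<kappa> * m - D * D) * \<Phi> z)) \<theta>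
    = D * expect (\<lambda>z. real_of_int z * (real_of_int z * \<Phi> z)) \<theta>
      + ((- 2 * D * m - \<kappa>) * expect (\<lambda>z. real_of_int z * \<Phi> z) \<theta> + (D * m * m + \<kappa> * m - D * D) * expect \<Phi> \<theta>)"
    using assms by (simp only: expect_add expect_cmult poly_bounded_mult poly_bounded_add
        poly_bounded_id poly_bounded_const)
  ultimately show ?thesis by (simp add: D_def m_def \<kappa>_def)
qed

lemma has_real_derivative_slope:
  assumes "admissible \<theta>" "poly_bounded \<Phi>"
  shows "(slope \<Phi> has_real_derivative
           expect (\<lambda>z. skewness_quad \<theta> z * \<Phi> z) \<theta> / (variance \<theta>)\<^sup>2) (at \<theta>)"
proof -
  define m1 where "m1 = mean \<theta>"
  define m2 where "m2 = expect (\<lambda>z. real_of_int z * real_of_int z) \<theta>"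
  define m3 where "m3 = expect (\<lambda>z. real_of_int z * (real_of_int z * real_of_int z)) \<theta>"
  define n0 where "n0 = expect \<Phi> \<theta>"
  define n1 where "n1 = expect (\<lambda>z. real_of_int z * \<Phi> z) \<theta>"
  define n2 where "n2 = expect (\<lambda>z. real_of_int z * (real_of_int z * \<Phi> z)) \<theta>"
  have d_m1: "(mean has_real_derivative m2 - m1 * m1) (at \<theta>)"
    and d_m2: "((\<lambda>t. expect (\<lambda>z. real_of_int z * real_of_int z) t) has_real_derivative m3 - m1 * m2) (at \<theta>)"
    and d_n0: "((\<lambda>t. expect \<Phi> t) has_real_derivative n1 - m1 * n0) (at \<theta>)"
    and d_n1: "((\<lambda>t. expect (\<lambda>z. real_of_int z * \<Phi> z) t) has_real_derivative n2 - m1 * n1) (at \<theta>)"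
    using has_real_derivative_expect[OF assms(1)] assms(2)
    by (auto simp: m1_def m2_def m3_def n0_def n1_def n2_def)
  define D where "D = variance \<theta>"
  have D: "m2 - m1 * m1 = D" "0 < D"
    using variance_eq_moments[OF assms(1)] variance_pos[OF assms(1)] by (simp_all add: D_def m1_def m2_def)
  have "expect (\<lambda>z. real_of_int z * real_of_int z) \<theta> - mean \<theta> * mean \<theta> \<noteq> 0"
    using D by (simp add: m1_def m2_def)
  from DERIV_divide[OF DERIV_diff[OF d_n1 DERIV_mult[OF d_m1 d_n0]]
      DERIV_diff[OF d_m2 DERIV_mult[OF d_m1 d_m1]] this, folded m1_def m2_def n0_def n1_def]
  have "(slope \<Phi> has_real_derivative
      ((n2 - m1 * n1 - (D * n0 + (n1 - m1 * n0) * m1)) * D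
        - (n1 - m1 * n0) * (m3 - m1 * m2 - (D * m1 + D * m1))) / (D * D)) (at \<theta>)"
    unfolding slope_def[abs_def] D(1) .
  moreover have "expect (\<lambda>z. skewness_quad \<theta> z * \<Phi> z) \<theta>
    = (n2 - m1 * n1 - (D * n0 + (n1 - m1 * n0) * m1)) * D
        - (n1 - m1 * n0) * (m3 - m1 * m2 - (D * m1 + D * m1))"
  proof -
    define \<kappa> where "\<kappa> = expect (\<lambda>y. (real_of_int y - mean \<theta>) ^ 3) \<theta>"
    have \<kappa>: "\<kappa> = m3 - 3 * m1 * m2 + 2 * m1 ^ 3"
      using third_central_moment_eq[OF assms(1)] by (simp add: \<kappa>_def m1_def m2_def m3_def)
    have m2: "m2 = D + m1 * m1" using D(1) by simp
    have "expect (\<lambda>z. skewness_quad \<theta> z * \<Phi> z) \<theta>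
        = D * n2 + ((- 2 * D * m1 - \<kappa>) * n1 + (D * m1 * m1 + \<kappa> * m1 - D * D) * n0)"
      using expect_skewness_quad_mult[OF assms]
      by (simp add: D_def m1_def n0_def n1_def n2_def \<kappa>_def)
    thus ?thesis unfolding \<kappa> m2 by (simp add: power3_eq_cube algebra_simps)
  qed
  ultimately show ?thesis by (simp add: D_def power2_eq_square)
qed

lemma poly_bounded_skewness_quad [simp]: "poly_bounded (skewness_quad \<theta>)"
  unfolding skewness_quad_def[abs_def] by (simp add: power2_eq_square)

lemma expect_skewness_quad_affine:
  assumes "admissible \<theta>"
  shows "expect (\<lambda>z. skewness_quad \<theta> z * (c0 + c1 * real_of_int z)) \<theta> = 0"
proof -
  define m1 where "m1 = mean \<theta>"
  define m2 where "m2 = expect (\<lambda>z. real_of_int z * real_of_int z) \<theta>"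
  define m3 where "m3 = expect (\<lambda>z. real_of_int z * (real_of_int z * real_of_int z)) \<theta>"
  have m2: "m2 = variance \<theta> + m1 * m1"
    using variance_eq_moments[OF assms] by (simp add: m1_def m2_def)
  have \<kappa>: "expect (\<lambda>y. (real_of_int y - mean \<theta>) ^ 3) \<theta> = m3 - 3 * m1 * m2 + 2 * m1 ^ 3"
    using third_central_moment_eq[OF assms] by (simp add: m1_def m2_def m3_def)
  have "expect (\<lambda>z. skewness_quad \<theta> z * 1) \<theta> = 0"
    using expect_skewness_quad_mult[OF assms, of "\<lambda>_. 1"] expect_const[OF assms]
    unfolding \<kappa> by (simp add: m1_def[symmetric] m2_def[symmetric] m2 algebra_simps power2_eq_square power3_eq_cube)
  moreover have "expect (\<lambda>z. skewness_quad \<theta> z * real_of_int z) \<theta> = 0"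
    using expect_skewness_quad_mult[OF assms poly_bounded_id]
    unfolding \<kappa> by (simp add: m1_def[symmetric] m2_def[symmetric] m3_def[symmetric] m2 algebra_simps power2_eq_square power3_eq_cube)
  moreover have "(\<lambda>z. skewness_quad \<theta> z * (c0 + c1 * real_of_int z))
      = (\<lambda>z. c0 * (skewness_quad \<theta> z * 1) + c1 * (skewness_quad \<theta> z * real_of_int z))"
    by (simp add: algebra_simps)
  ultimately show ?thesis
    using assms by (simp only: expect_add expect_cmult poly_bounded_mult
        poly_bounded_skewness_quad poly_bounded_id poly_bounded_const)
qed

lemma expect_skewness_quad_nonneg:
  assumes "admissible \<theta>" "poly_bounded \<Phi>" "secant_sign \<Phi>"
  shows "0 \<le> expect (\<lambda>z. skewness_quad \<theta> z * \<Phi> z) \<theta>"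
proof -
  define D where "D = variance \<theta>"
  define \<kappa> where "\<kappa> = expect (\<lambda>y. (real_of_int y - mean \<theta>) ^ 3) \<theta>"
  define r where "r = sqrt (\<kappa>\<^sup>2 + 4 * D ^ 3)"
  define r1 where "r1 = mean \<theta> + (\<kappa> - r) / (2 * D)"
  define r2 where "r2 = mean \<theta> + (\<kappa> + r) / (2 * D)"
  have D: "0 < D" using variance_pos[OF assms(1)] by (simp add: D_def)
  note roots = quadratic_factor[OF D, where \<kappa> = \<kappa>, folded r_def]
  have factor: "skewness_quad \<theta> z = D * ((real_of_int z - r1) * (real_of_int z - r2))" for z
  proof -
    have "skewness_quad \<theta> z
        = D * ((real_of_int z - mean \<theta> - (\<kappa> - r) / (2 * D)) * (real_of_int z - mean \<theta> - (\<kappa> + r) / (2 * D)))"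
      unfolding skewness_quad_def D_def[symmetric] \<kappa>_def[symmetric] by (rule roots(1)[of "real_of_int z - mean \<theta>"])
    thus ?thesis by (simp add: r1_def r2_def diff_diff_eq)
  qed
  have "r1 \<le> r2" using roots(2) by (simp add: r1_def r2_def)
  then obtain c0 c1 where sign: "\<And>z. 0 \<le> (real_of_int z - r1) * (real_of_int z - r2) * (\<Phi> z - (c0 + c1 * real_of_int z))"
    using assms(3) unfolding secant_sign_def by blast
  have "(\<lambda>z. skewness_quad \<theta> z * \<Phi> z) = (\<lambda>z. skewness_quad \<theta> z * (\<Phi> z - (c0 + c1 * real_of_int z))
      + skewness_quad \<theta> z * (c0 + c1 * real_of_int z))"
    by (simp add: algebra_simps)
  hence "expect (\<lambda>z. skewness_quad \<theta> z * \<Phi> z) \<theta>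
      = expect (\<lambda>z. skewness_quad \<theta> z * (\<Phi> z - (c0 + c1 * real_of_int z))) \<theta>"
    using assms(1,2) expect_skewness_quad_affine[OF assms(1)] by (simp add: expect_add)
  also have "\<dots> \<ge> 0"
    using D sign by (intro expect_nonneg[OF assms(1)]) (simp add: factor mult.assoc)
  finally show ?thesis .
qed

lemma slope_mono:
  assumes "poly_bounded \<Phi>" "secant_sign \<Phi>" "admissible a" "admissible b" "a \<le> b"
  shows "slope \<Phi> a \<le> slope \<Phi> b"
  using assms(5)
proof (rule DERIV_nonneg_imp_nondecreasing)
  fix t assume "a \<le> t" "t \<le> b"
  hence "admissible t" by (rule admissible_between[OF assms(3,4)])
  have "0 \<le> expect (\<lambda>z. skewness_quad t z * \<Phi> z) t / (variance t)\<^sup>2"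
    using expect_skewness_quad_nonneg[OF \<open>admissible t\<close> assms(1,2)] by simp
  thus "\<exists>y. (slope \<Phi> has_real_derivative y) (at t) \<and> 0 \<le> y"
    using has_real_derivative_slope[OF \<open>admissible t\<close> assms(1)] by blast
qed

section \<open>Summation by parts\<close>

lemma interval_zero_subset_I:
  assumes "z \<in> I"
  shows "{min 0 z..<max 0 z} \<subseteq> I"
  using mem_I_between[OF zero_mem_I assms] mem_I_between[OF assms zero_mem_I]
  by (cases "0 \<le> z") auto

lemma has_sum_step_kernel:
  "z \<in> I \<Longrightarrow> ((\<lambda>y. \<phi> y * step_kernel y z) has_sum antidiff \<phi> z) I"
  by (rule has_sum_finite_neutralI[OF _ interval_zero_subset_I])
    (auto simp: step_kernel_eq_0 antidiff_eq_sum_step_kernel)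

lemma infsum_abs_step_kernel_le:
  assumes "z \<in> I" "\<And>y. \<bar>\<phi> y\<bar> \<le> B"
  shows "(\<Sum>\<^sub>\<infinity>y\<in>I. \<bar>\<phi> y * step_kernel y z\<bar>) \<le> B * \<bar>real_of_int z\<bar>"
proof -
  have "(\<Sum>\<^sub>\<infinity>y\<in>I. \<bar>\<phi> y * step_kernel y z\<bar>) = (\<Sum>y\<in>{min 0 z..<max 0 z}. \<bar>\<phi> y * step_kernel y z\<bar>)"
    using interval_zero_subset_I[OF assms(1)]
    by (subst infsum_cong_neutral[where T = "{min 0 z..<max 0 z}" and g = "\<lambda>y. \<bar>\<phi> y * step_kernel y z\<bar>"])
      (auto simp: step_kernel_eq_0)
  also have "\<dots> \<le> (\<Sum>y\<in>{min 0 z..<max 0 z}. B)"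
  proof (rule sum_mono)
    fix y
    have "\<bar>\<phi> y * step_kernel y z\<bar> \<le> \<bar>\<phi> y\<bar> * 1"
      unfolding abs_mult by (intro mult_left_mono abs_step_kernel_le) auto
    thus "\<bar>\<phi> y * step_kernel y z\<bar> \<le> B" using assms(2)[of y] by simp
  qed
  also have "\<dots> = B * \<bar>real_of_int z\<bar>"
    by (cases "0 \<le> z") (auto simp: mult.commute)
  finally show ?thesis .
qed

lemma summable_on_step_kernel_prod:
  assumes "admissible \<theta>" "\<And>y. \<bar>\<phi> y\<bar> \<le> B" "poly_bounded g"
  shows "(\<lambda>(z, y). \<phi> y * step_kernel y z * (g z * weight \<theta> z)) summable_on I \<times> I"
proof -
  let ?F = "\<lambda>(z, y). \<phi> y * step_kernel y z * (g z * weight \<theta> z)"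
  have "(\<lambda>y. norm (?F (z, y))) summable_on I" for z
    by (rule finite_nonzero_values_imp_summable_on, rule finite_subset[of _ "{min 0 z..<max 0 z}"])
      (auto simp: step_kernel_def split: if_splits)
  moreover have "(\<lambda>z. \<bar>B * real_of_int z * g z\<bar> * weight \<theta> z) summable_on I"
    using assms(1,3) by (intro summable_weight) auto
  hence "(\<lambda>z. \<Sum>\<^sub>\<infinity>y\<in>I. norm (?F (z, y))) summable_on I"
  proof (rule summable_on_comparison_test)
    fix z assume z: "z \<in> I"
    have "(\<Sum>\<^sub>\<infinity>y\<in>I. norm (?F (z, y))) = (\<Sum>\<^sub>\<infinity>y\<in>I. \<bar>\<phi> y * step_kernel y z\<bar>) * \<bar>g z * weight \<theta> z\<bar>"
      by (simp add: abs_mult infsum_cmult_left')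
    also have "\<dots> \<le> B * \<bar>real_of_int z\<bar> * \<bar>g z * weight \<theta> z\<bar>"
      by (intro mult_right_mono infsum_abs_step_kernel_le[OF z assms(2)]) auto
    also have "\<dots> \<le> \<bar>B * real_of_int z * g z\<bar> * weight \<theta> z"
      using mult_right_mono[OF abs_ge_self[of B], of "\<bar>real_of_int z\<bar> * (\<bar>g z\<bar> * weight \<theta> z)"]
        weight_nonneg[OF z] by (simp add: abs_mult mult_ac)
    finally show "(\<Sum>\<^sub>\<infinity>y\<in>I. norm (?F (z, y))) \<le> \<bar>B * real_of_int z * g z\<bar> * weight \<theta> z" .
  qed (simp add: infsum_nonneg)
  hence "(\<lambda>z. norm (\<Sum>\<^sub>\<infinity>y\<in>I. norm (?F (z, y)))) summable_on I"
    by (simp add: infsum_nonneg)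
  ultimately have "(\<lambda>x. norm (?F x)) summable_on I \<times> I"
    using Infinite_Sum.abs_summable_on_Sigma_iff[where f = ?F and A = I and B = "\<lambda>_. I"] by blast
  thus ?thesis by (rule abs_summable_summable)
qed

lemma summation_by_parts:
  assumes "admissible \<theta>" "\<And>y. \<bar>\<phi> y\<bar> \<le> B" "wsum (\<lambda>z. real_of_int z - c) \<theta> = 0"
  shows "(\<Sum>\<^sub>\<infinity>y\<in>I. \<phi> y * (\<Sum>\<^sub>\<infinity>z\<in>{z\<in>I. y < z}. (real_of_int z - c) * weight \<theta> z))
       = wsum (\<lambda>z. (real_of_int z - c) * antidiff \<phi> z) \<theta>"
proof -
  define q where "q z = (real_of_int z - c) * weight \<theta> z" for z
  have "q summable_on I"
    using summable_weight[OF assms(1), of "\<lambda>z. real_of_int z - c"] by (simp add: q_def[abs_def])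
  hence tail: "(\<Sum>\<^sub>\<infinity>z\<in>{z\<in>I. y < z}. q z) = (\<Sum>\<^sub>\<infinity>z\<in>I. step_kernel y z * q z)" for y
    by (rule infsum_tail_eq_step_kernel) (use assms(3) in \<open>simp add: q_def wsum_def\<close>)
  have "(\<Sum>\<^sub>\<infinity>y\<in>I. \<phi> y * (\<Sum>\<^sub>\<infinity>z\<in>{z\<in>I. y < z}. q z))
      = (\<Sum>\<^sub>\<infinity>y\<in>I. \<Sum>\<^sub>\<infinity>z\<in>I. \<phi> y * step_kernel y z * q z)"
    unfolding tail by (simp add: infsum_cmult_right' mult.assoc)
  also have "\<dots> = (\<Sum>\<^sub>\<infinity>z\<in>I. \<Sum>\<^sub>\<infinity>y\<in>I. \<phi> y * step_kernel y z * q z)"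
    using summable_on_step_kernel_prod[OF assms(1,2), of "\<lambda>z. real_of_int z - c"]
    by (intro infsum_swap_banach[symmetric]) (simp add: q_def)
  also have "\<dots> = (\<Sum>\<^sub>\<infinity>z\<in>I. antidiff \<phi> z * q z)"
  proof (rule infsum_cong)
    fix z assume "z \<in> I"
    thus "(\<Sum>\<^sub>\<infinity>y\<in>I. \<phi> y * step_kernel y z * q z) = antidiff \<phi> z * q z"
      using has_sum_step_kernel[of z \<phi>] by (simp add: infsum_cmult_left' infsumI)
  qed
  finally show ?thesis by (simp add: wsum_def q_def mult_ac)
qed

lemma muhat_eq:
  assumes "wmin < ereal \<rho>" "ereal \<rho> < wmax"
  defines "\<theta> \<equiv> theta_of wmin wmax f \<rho>"
  shows "muhat wmin wmax f \<rho> y = (\<Sum>\<^sub>\<infinity>z\<in>{z\<in>I. y < z}. (real_of_int z - \<rho>) * weight \<theta> z)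
      / (variance \<theta> * Z \<theta>)"
proof -
  note spec = theta_of_spec[OF assms(1,2), folded \<theta>_def]
  have infsum_divide: "(\<Sum>\<^sub>\<infinity>z\<in>S. h z / c) = (\<Sum>\<^sub>\<infinity>z\<in>S. h z) / c" for S h and c :: real
    by (simp add: divide_inverse infsum_cmult_left')
  have mu: "mu_rho wmin wmax f \<rho> z = weight \<theta> z / Z \<theta>" for z
    by (simp add: mu_rho_def mu_theta_eq \<theta>_def)
  have "var_rho wmin wmax f \<rho> = (\<Sum>\<^sub>\<infinity>z\<in>I. (real_of_int z - \<rho>)\<^sup>2 * weight \<theta> z) / Z \<theta>"
    unfolding var_rho_def mu by (simp add: infsum_divide[symmetric])
  also have "\<dots> = variance \<theta>"
    unfolding variance_def spec(2) by (simp add: expect_def wsum_def)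
  finally have var: "var_rho wmin wmax f \<rho> = variance \<theta>" .
  have "(\<Sum>\<^sub>\<infinity>z\<in>{z\<in>I. y < z}. (real_of_int z - \<rho>) * mu_rho wmin wmax f \<rho> z)
      = (\<Sum>\<^sub>\<infinity>z\<in>{z\<in>I. y < z}. (real_of_int z - \<rho>) * weight \<theta> z) / Z \<theta>"
    unfolding mu by (simp add: infsum_divide[symmetric])
  thus ?thesis unfolding muhat_def var by simp
qed

lemma sum_muhat_eq_slope:
  assumes "wmin < ereal \<rho>" "ereal \<rho> < wmax" "\<And>y. y \<in> I \<Longrightarrow> \<psi> y = \<phi> y" "\<And>y. \<bar>\<psi> y\<bar> \<le> B"
  shows "(\<Sum>\<^sub>\<infinity>y\<in>I. \<phi> y * muhat wmin wmax f \<rho> y) = slope (antidiff \<psi>) (theta_of wmin wmax f \<rho>)"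
proof -
  define \<theta> where "\<theta> = theta_of wmin wmax f \<rho>"
  note spec = theta_of_spec[OF assms(1,2), folded \<theta>_def]
  have Z: "0 < Z \<theta>" by (rule Zpart_pos[OF spec(1)])
  have Phi: "poly_bounded (antidiff \<psi>)" by (rule poly_bounded_antidiff[OF assms(4)])
  have "expect (\<lambda>z. real_of_int z + (- \<rho>)) \<theta> = mean \<theta> + (- \<rho>)"
    using spec(1) by (simp only: expect_add expect_const poly_bounded_id poly_bounded_const)
  hence "wsum (\<lambda>z. real_of_int z - \<rho>) \<theta> = 0"
    using spec(2) Z by (simp add: expect_def)
  note parts = summation_by_parts[OF spec(1) assms(4) this]
  have "(\<Sum>\<^sub>\<infinity>y\<in>I. \<phi> y * muhat wmin wmax f \<rho> y)
      = (\<Sum>\<^sub>\<infinity>y\<in>I. \<psi> y * (\<Sum>\<^sub>\<infinity>z\<in>{z\<in>I. y < z}. (real_of_int z - \<rho>) * weight \<theta> z)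
          * inverse (variance \<theta> * Z \<theta>))"
    using assms(3) by (intro infsum_cong) (simp add: muhat_eq[OF assms(1,2)] \<theta>_def divide_inverse)
  also have "\<dots> = (\<Sum>\<^sub>\<infinity>y\<in>I. \<psi> y * (\<Sum>\<^sub>\<infinity>z\<in>{z\<in>I. y < z}. (real_of_int z - \<rho>) * weight \<theta> z))
        / (variance \<theta> * Z \<theta>)"
    by (simp add: infsum_cmult_left' divide_inverse)
  also have "\<dots> = expect (\<lambda>z. (real_of_int z - \<rho>) * antidiff \<psi> z) \<theta> / variance \<theta>"
    unfolding parts by (simp add: expect_def)
  also have "expect (\<lambda>z. (real_of_int z - \<rho>) * antidiff \<psi> z) \<theta>
      = expect (\<lambda>z. real_of_int z * antidiff \<psi> z) \<theta> - \<rho> * expect (antidiff \<psi>) \<theta>"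
  proof -
    have "(\<lambda>z. (real_of_int z - \<rho>) * antidiff \<psi> z) = (\<lambda>z. real_of_int z * antidiff \<psi> z + (- \<rho>) * antidiff \<psi> z)"
      by (simp add: algebra_simps)
    moreover have "expect (\<lambda>z. real_of_int z * antidiff \<psi> z + (- \<rho>) * antidiff \<psi> z) \<theta>
        = expect (\<lambda>z. real_of_int z * antidiff \<psi> z) \<theta> + (- \<rho>) * expect (antidiff \<psi>) \<theta>"
      using spec(1) Phi by (simp only: expect_add expect_cmult poly_bounded_mult poly_bounded_id poly_bounded_const)
    ultimately show ?thesis by simp
  qed
  finally show ?thesis
    using variance_eq_moments[OF spec(1)] spec(2) unfolding \<theta>_def[symmetric] slope_def by simp
qed

theorem sum_muhat_mono:
  assumes "\<forall>y\<in>I. \<bar>\<phi> y\<bar> \<le> B" "mono_on I \<phi>"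
    and "wmin < ereal \<rho>1" "\<rho>1 \<le> \<rho>2" "ereal \<rho>2 < wmax"
  shows "(\<Sum>\<^sub>\<infinity>y\<in>I. \<phi> y * muhat wmin wmax f \<rho>1 y) \<le> (\<Sum>\<^sub>\<infinity>y\<in>I. \<phi> y * muhat wmin wmax f \<rho>2 y)"
proof -
  obtain \<psi> where \<psi>: "mono \<psi>" "\<And>y. y \<in> I \<Longrightarrow> \<psi> y = \<phi> y" "\<And>y. \<bar>\<psi> y\<bar> \<le> B"
    using monotone_bounded_extension[OF assms(2,1)] by blast
  have "ereal \<rho>1 < wmax" "wmin < ereal \<rho>2"
    using assms(3-5) by (meson ereal_less_eq(3) le_less_trans less_le_trans)+
  hence "(\<Sum>\<^sub>\<infinity>y\<in>I. \<phi> y * muhat wmin wmax f \<rho>1 y) = slope (antidiff \<psi>) (theta_of wmin wmax f \<rho>1)"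
    and "(\<Sum>\<^sub>\<infinity>y\<in>I. \<phi> y * muhat wmin wmax f \<rho>2 y) = slope (antidiff \<psi>) (theta_of wmin wmax f \<rho>2)"
    using assms(3,5) \<psi>(2,3) by (blast intro: sum_muhat_eq_slope)+
  moreover have "slope (antidiff \<psi>) (theta_of wmin wmax f \<rho>1) \<le> slope (antidiff \<psi>) (theta_of wmin wmax f \<rho>2)"
    using poly_bounded_antidiff[of \<psi> B, OF \<psi>(3)] secant_sign_antidiff[OF \<psi>(1)]
      theta_of_spec(1)[OF assms(3) \<open>ereal \<rho>1 < wmax\<close>] theta_of_spec(1)[OF \<open>wmin < ereal \<rho>2\<close> assms(5)]
      theta_of_mono[OF assms(3-5)]
    by (rule slope_mono)
  ultimately show ?thesis by simp
qed

end

theorem propositionB4: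
  fixes wmin wmax :: ereal and f :: "int \<Rightarrow> real" and \<phi> :: "int \<Rightarrow> real"
  assumes wmin: "wmin = -\<infinity> \<or> (\<exists>k::int. k \<le> 0 \<and> wmin = ereal (real_of_int k))"
    and wmax: "wmax = \<infinity> \<or> (\<exists>k::int. 1 \<le> k \<and> wmax = ereal (real_of_int k))"
    and f_nonneg: "\<forall>z\<in>Iset wmin wmax. 0 \<le> f z"
    and f_mono: "mono_on (Iset wmin wmax) f"
    and f_wmin: "\<forall>k::int. wmin = ereal (real_of_int k) \<longrightarrow> f k = 0"
    and f_pos: "\<forall>z\<in>Iset wmin wmax. wmin < ereal (real_of_int z) \<longrightarrow> 0 < f z"
    and theta_lt: "theta_inf wmin f < theta_sup wmax f"
    and phi_bdd: "\<exists>B. \<forall>y\<in>Iset wmin wmax. \<bar>\<phi> y\<bar> \<le> B"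
    and phi_mono: "mono_on (Iset wmin wmax) \<phi>"
    and rho1: "wmin < ereal \<rho>1" and rho12: "\<rho>1 \<le> \<rho>2" and rho2: "ereal \<rho>2 < wmax"
  shows "(\<Sum>\<^sub>\<infinity>y\<in>Iset wmin wmax. \<phi> y * muhat wmin wmax f \<rho>1 y)
           \<le> (\<Sum>\<^sub>\<infinity>y\<in>Iset wmin wmax. \<phi> y * muhat wmin wmax f \<rho>2 y)"
proof -
  interpret zero_range wmin wmax f
    using wmin wmax f_mono f_pos theta_lt by unfold_locales
  obtain B where "\<forall>y\<in>Iset wmin wmax. \<bar>\<phi> y\<bar> \<le> B" using phi_bdd by blast
  thus ?thesis by (rule sum_muhat_mono[OF _ phi_mono rho1 rho12 rho2])
qed

end
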